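(* Let $(\Omega,\Sigma,\mu)$ be a measure space, $X(\mu)$ a $\sigma$-order continuous quasi-Banach function space with the $\sigma$-property, $E$ a Banach space and $T\colon X(\mu)\to E$ a continuous linear operator. Then $[i]\colon X(\mu)\to L^1(m_T)$ is well defined, $T=I_{m_T}\circ[i]$, and $I_{m_T}\colon L^1(m_T)\to E$ is continuous. Moreover the factorization is optimal: if $\xi$ is a measure on $\Sigma$ with $\xi\ll\mu$, $Z(\xi)$ is a $\sigma$-order continuous quasi-Banach function space such that $[i]\colon X(\mu)\to Z(\xi)$ is well defined, and $S\colon Z(\xi)\to E$ is a continuous linear operator with $T=S\circ[i]$, then $[i]\colon Z(\xi)\to L^1(m_T)$ is well defined and $S=I_{m_T}\circ[i]$.
   Context: $L^0(\lambda)$: $\lambda$-a.e. classes of $\Sigma$-measurable real functions. An ideal function space $Y(\lambda)\subset L^0(\lambda)$ is a vector subspace with $f\in Y(\lambda)$, $|g|\le|f|$ a.e. $\Rightarrow g\in Y(\lambda)$. A quasi-norm satisfies $\|x\|=0\iff x=0$, $\|\alpha x\|=|\alpha|\|x\|$, $\|x+y\|\le K(\|x\|+\|y\|)$ for some $K\ge1$. A quasi-Banach function space is an ideal function space complete under a quasi-norm with $|f|\le|g|$ a.e. $\Rightarrow\|f\|\le\|g\|$; it is $\sigma$-order continuous if $f_n\downarrow0$ a.e. implies $\|f_n\|\downarrow0$. $\sigma$-property: $\Omega=\bigcup_n\Omega_n$, $\Omega_n\in\Sigma$, $\chi_{\Omega_n}\in X(\mu)$. For $\xi\ll\lambda$,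 $[i]$ maps the $\lambda$-class of $f$ to its $\xi$-class; "$[i]\colon Y(\lambda)\to W(\xi)$ is well defined" means $\xi\ll\lambda$ and the $\xi$-class of each $f\in Y(\lambda)$ lies in $W(\xi)$. $\Sigma_{X(\mu)}=\{A\in\Sigma:\chi_A\in X(\mu)\}$ ($\delta$-ring with local $\sigma$-algebra $\Sigma$), $m_T(A)=T(\chi_A)$ for $A\in\Sigma_{X(\mu)}$ (a vector measure under the hypotheses). For a vector measure $m$ on $\Sigma_{X(\mu)}$: $|x^*m|$ the variation of $x^*\circ m$ on $\Sigma$, $\|m\|=\sup_{x^*\in B_{E^*}}|x^*m|$, $L^0(m)$ = $\Sigma$-measurable functions modulo $\|m\|$-null sets; $L^1(m)$ = those $f\in L^0(m)$ with $f\in L^1(|x^*m|)$ for all $x^*$ and, for each $A\in\Sigma$, some $\int_Af\,dm\in E$ with $x^*(\int_Af\,dm)=\int_Af\,dx^*m$ for all $x^*$, normed by $\sup_{x^*\in B_{E^*}}\int|f|\,d|x^*m|$; $I_m(f)=\int_\Omega f\,dm$. *)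

theory Defs
  imports "HOL-Analysis.Analysis"
begin

text \<open>Function spaces are represented by sets of real functions that are closed under
  a.e. equality (this follows from the ideal property); a quasi-norm is a function on them
  which is invariant under a.e. equality (this follows from monotonicity).\<close>

definition ideal_fs :: "'a measure \<Rightarrow> ('a \<Rightarrow> real) set \<Rightarrow> bool" where
  "ideal_fs M Y \<longleftrightarrow> Y \<subseteq> borel_measurable M \<and> (\<lambda>x. 0) \<in> Y \<and>
     (\<forall>f\<in>Y. \<forall>g\<in>Y. (\<lambda>x. f x + g x) \<in> Y) \<and> (\<forall>f\<in>Y. \<forall>c::real. (\<lambda>x. c * f x) \<in> Y) \<and>
     (\<forall>f\<in>Y. \<forall>g\<in>borel_measurable M. (AE x in M. \<bar>g x\<bar> \<le> \<bar>f x\<bar>) \<longrightarrow> g \<in> Y)"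

definition qbfs :: "'a measure \<Rightarrow> ('a \<Rightarrow> real) set \<Rightarrow> (('a \<Rightarrow> real) \<Rightarrow> real) \<Rightarrow> bool" where
  "qbfs M Y nY \<longleftrightarrow> ideal_fs M Y \<and>
     (\<forall>f\<in>Y. nY f \<ge> 0) \<and>
     (\<forall>f\<in>Y. nY f = 0 \<longleftrightarrow> (AE x in M. f x = 0)) \<and>
     (\<forall>f\<in>Y. \<forall>c. nY (\<lambda>x. c * f x) = \<bar>c\<bar> * nY f) \<and>
     (\<exists>K\<ge>1. \<forall>f\<in>Y. \<forall>g\<in>Y. nY (\<lambda>x. f x + g x) \<le> K * (nY f + nY g)) \<and>
     (\<forall>f\<in>Y. \<forall>g\<in>Y. (AE x in M. \<bar>f x\<bar> \<le> \<bar>g x\<bar>) \<longrightarrow> nY f \<le> nY g) \<and>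
     (\<forall>u. (\<forall>n. u n \<in> Y) \<longrightarrow>
        (\<forall>e>0. \<exists>N. \<forall>m\<ge>N. \<forall>n\<ge>N. nY (\<lambda>x. u m x - u n x) < e) \<longrightarrow>
        (\<exists>v\<in>Y. (\<lambda>n. nY (\<lambda>x. u n x - v x)) \<longlonglongrightarrow> 0))"

definition sigma_order_cont :: "'a measure \<Rightarrow> ('a \<Rightarrow> real) set \<Rightarrow> (('a \<Rightarrow> real) \<Rightarrow> real) \<Rightarrow> bool" where
  "sigma_order_cont M Y nY \<longleftrightarrow> (\<forall>u. (\<forall>n. u n \<in> Y) \<longrightarrow>
     (AE x in M. decseq (\<lambda>n. u n x) \<and> (\<lambda>n. u n x) \<longlonglongrightarrow> 0) \<longrightarrow>
     (\<lambda>n. nY (u n)) \<longlonglongrightarrow> 0)"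

definition sigma_property :: "'a measure \<Rightarrow> ('a \<Rightarrow> real) set \<Rightarrow> bool" where
  "sigma_property M Y \<longleftrightarrow> (\<exists>\<Omega>::nat \<Rightarrow> 'a set. (\<forall>n. \<Omega> n \<in> sets M \<and> (indicator (\<Omega> n) :: 'a \<Rightarrow> real) \<in> Y)
      \<and> (\<Union>n. \<Omega> n) = space M)"

definition cont_lin_op :: "('a \<Rightarrow> real) set \<Rightarrow> (('a \<Rightarrow> real) \<Rightarrow> real) \<Rightarrow> (('a \<Rightarrow> real) \<Rightarrow> 'b::real_normed_vector) \<Rightarrow> bool" where
  "cont_lin_op Y nY T \<longleftrightarrow> (\<forall>f\<in>Y. \<forall>g\<in>Y. T (\<lambda>x. f x + g x) = T f + T g) \<and>
     (\<forall>f\<in>Y. \<forall>c. T (\<lambda>x. c * f x) = c *\<^sub>R T f) \<and>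
     (\<forall>f\<in>Y. \<forall>e>0. \<exists>d>0. \<forall>g\<in>Y. nY (\<lambda>x. g x - f x) < d \<longrightarrow> dist (T g) (T f) < e)"

definition SigmaX :: "'a measure \<Rightarrow> ('a \<Rightarrow> real) set \<Rightarrow> 'a set set" where
  "SigmaX M X = {A \<in> sets M. (indicator A :: 'a \<Rightarrow> real) \<in> X}"

definition mT :: "(('a \<Rightarrow> real) \<Rightarrow> 'b) \<Rightarrow> 'a set \<Rightarrow> 'b" where
  "mT T A = T (indicator A)"

definition sm_var :: "'a measure \<Rightarrow> 'a set set \<Rightarrow> ('a set \<Rightarrow> real) \<Rightarrow> 'a measure" where
  "sm_var M R \<nu> = measure_of (space M) (sets M)
     (\<lambda>A. SUP F\<in>{F. finite F \<and> F \<subseteq> R \<and> disjoint F \<and> (\<forall>B\<in>F. B \<subseteq> A)}. ennreal (\<Sum>B\<in>F. \<bar>\<nu> B\<bar>))"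

definition sm_pos :: "'a measure \<Rightarrow> 'a set set \<Rightarrow> ('a set \<Rightarrow> real) \<Rightarrow> 'a measure" where
  "sm_pos M R \<nu> = measure_of (space M) (sets M)
     (\<lambda>A. SUP B\<in>{B \<in> R. B \<subseteq> A}. ennreal (\<nu> B))"

definition sm_neg :: "'a measure \<Rightarrow> 'a set set \<Rightarrow> ('a set \<Rightarrow> real) \<Rightarrow> 'a measure" where
  "sm_neg M R \<nu> = measure_of (space M) (sets M)
     (\<lambda>A. SUP B\<in>{B \<in> R. B \<subseteq> A}. ennreal (- \<nu> B))"

definition sm_integral :: "'a measure \<Rightarrow> 'a set set \<Rightarrow> ('a set \<Rightarrow> real) \<Rightarrow> 'a set \<Rightarrow> ('a \<Rightarrow> real) \<Rightarrow> real" where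
  "sm_integral M R \<nu> A f = (LINT x:A|sm_pos M R \<nu>. f x) - (LINT x:A|sm_neg M R \<nu>. f x)"

definition vm_semivar :: "'a measure \<Rightarrow> 'a set set \<Rightarrow> ('a set \<Rightarrow> 'b::real_normed_vector) \<Rightarrow> 'a set \<Rightarrow> ennreal" where
  "vm_semivar M R m A = (SUP x'\<in>{x'::'b \<Rightarrow>\<^sub>L real. norm x' \<le> 1}. emeasure (sm_var M R (\<lambda>B. blinfun_apply x' (m B))) A)"

definition L1vm :: "'a measure \<Rightarrow> 'a set set \<Rightarrow> ('a set \<Rightarrow> 'b::real_normed_vector) \<Rightarrow> ('a \<Rightarrow> real) set" where
  "L1vm M R m = {f \<in> borel_measurable M.
     (\<forall>x'::'b \<Rightarrow>\<^sub>L real. integrable (sm_var M R (\<lambda>B. blinfun_apply x' (m B))) f) \<and>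
     (\<forall>A\<in>sets M. \<exists>e::'b. \<forall>x'::'b \<Rightarrow>\<^sub>L real. blinfun_apply x' e = sm_integral M R (\<lambda>B. blinfun_apply x' (m B)) A f)}"

definition L1vm_norm :: "'a measure \<Rightarrow> 'a set set \<Rightarrow> ('a set \<Rightarrow> 'b::real_normed_vector) \<Rightarrow> ('a \<Rightarrow> real) \<Rightarrow> ennreal" where
  "L1vm_norm M R m f = (SUP x'\<in>{x'::'b \<Rightarrow>\<^sub>L real. norm x' \<le> 1}.
      \<integral>\<^sup>+ x. ennreal \<bar>f x\<bar> \<partial>sm_var M R (\<lambda>B. blinfun_apply x' (m B)))"

definition vm_integral :: "'a measure \<Rightarrow> 'a set set \<Rightarrow> ('a set \<Rightarrow> 'b::real_normed_vector) \<Rightarrow> 'a set \<Rightarrow> ('a \<Rightarrow> real) \<Rightarrow> 'b" where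
  "vm_integral M R m A f = (THE e. \<forall>x'::'b \<Rightarrow>\<^sub>L real. blinfun_apply x' e = sm_integral M R (\<lambda>B. blinfun_apply x' (m B)) A f)"

definition I_vm :: "'a measure \<Rightarrow> 'a set set \<Rightarrow> ('a set \<Rightarrow> 'b::real_normed_vector) \<Rightarrow> ('a \<Rightarrow> real) \<Rightarrow> 'b" where
  "I_vm M R m f = vm_integral M R m (space M) f"

text \<open>[i]: Y(N) \<rightarrow> L^1(m) is well defined: ||m|| is absolutely continuous w.r.t. N and
  every f in Y lies in L^1(m).\<close>
definition incl_into_L1 :: "'a measure \<Rightarrow> ('a \<Rightarrow> real) set \<Rightarrow> 'a measure \<Rightarrow> 'a set set \<Rightarrow> ('a set \<Rightarrow> 'b::real_normed_vector) \<Rightarrow> bool" where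
  "incl_into_L1 N Y M R m \<longleftrightarrow> (\<forall>A\<in>sets N. emeasure N A = 0 \<longrightarrow> vm_semivar M R m A = 0) \<and> Y \<subseteq> L1vm M R m"

end

theory Submission
  imports Defs
begin

text \<open>For each functional \<open>x'\<close> in the dual of \<open>E\<close>, the scalar set function \<open>x' \<circ> m\<^sub>T\<close> is countably
  additive on the \<open>\<delta>\<close>-ring \<open>\<Sigma>\<^sub>X\<close> because \<open>T\<close> extends continuously along monotone limits
  (\<open>\<sigma>\<close>-order continuity), so its Jordan decomposition \<open>\<mu>\<^sup>+\<^sub>x', \<mu>\<^sup>-\<^sub>x'\<close> consists of genuine measures
  on \<open>\<Sigma>\<close>. For any extension \<open>S\<close> of \<open>T\<close> to a \<open>\<sigma>\<close>-order continuous space \<open>Z\<close>, comparing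
  \<open>\<integral> u d\<mu>\<^sup>+\<^sub>x'\<close> with \<open>sup {x'(S h) | h \<in> X, 0 \<le> h \<le> u}\<close> makes every \<open>u \<in> Z\<close> integrable, and
  \<open>x'(S u) = \<integral> u d\<mu>\<^sup>+\<^sub>x' - \<integral> u d\<mu>\<^sup>-\<^sub>x'\<close> propagates from indicators of sets in \<open>\<Sigma>\<^sub>X\<close> (using the
  \<open>\<sigma>\<close>-property) to all of \<open>Z\<close> by monotone limits. As the dual separates points (Hahn--Banach), this
  says \<open>S u = I\<^sub>m\<^sub>T(u)\<close>; the case \<open>Z = X\<close>, \<open>S = T\<close> gives the factorization itself.\<close>

section \<open>A norming functional\<close>

text \<open>Partial functionals are handled through their graphs, so that Zorn's lemma applies to \<open>\<subseteq>\<close>.\<close>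

definition dominated_linear_graph :: "('b::real_normed_vector \<times> real) set \<Rightarrow> bool" where
  "dominated_linear_graph G \<longleftrightarrow> (\<forall>x a b. (x,a) \<in> G \<longrightarrow> (x,b) \<in> G \<longrightarrow> a = b) \<and>
     (\<forall>x a y b. (x,a) \<in> G \<longrightarrow> (y,b) \<in> G \<longrightarrow> (x + y, a + b) \<in> G) \<and>
     (\<forall>x a c. (x,a) \<in> G \<longrightarrow> (c *\<^sub>R x, c * a) \<in> G) \<and> (\<forall>x a. (x,a) \<in> G \<longrightarrow> \<bar>a\<bar> \<le> norm x)"

lemma dominated_linear_graphD:
  assumes "dominated_linear_graph G"
  shows dominated_linear_graph_unique: "(x,a) \<in> G \<Longrightarrow> (x,b) \<in> G \<Longrightarrow> a = b"
    and dominated_linear_graph_add: "(x,a) \<in> G \<Longrightarrow> (y,b) \<in> G \<Longrightarrow> (x + y, a + b) \<in> G"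
    and dominated_linear_graph_scaleR: "(x,a) \<in> G \<Longrightarrow> (c *\<^sub>R x, c * a) \<in> G"
    and dominated_linear_graph_bound: "(x,a) \<in> G \<Longrightarrow> \<bar>a\<bar> \<le> norm x"
  using assms unfolding dominated_linear_graph_def by blast+

text \<open>The one-dimensional step of the Hahn--Banach theorem: a value \<open>c\<close> at \<open>z\<close> that keeps
  the extended functional dominated exists because \<open>a - \<parallel>x - z\<parallel> \<le> \<parallel>y + z\<parallel> - b\<close> for all
  \<open>(x,a), (y,b) \<in> G\<close>.\<close>
lemma dominated_linear_graph_extension_value:
  assumes G: "dominated_linear_graph G" and G0: "(0,0) \<in> G"
  obtains c where "\<And>y b. (y,b) \<in> G \<Longrightarrow> \<bar>b + c\<bar> \<le> norm (y + z)"
proof -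
  define S where "S = {a - norm (x - z) | x a. (x,a) \<in> G}"
  have key: "a - norm (x - z) \<le> norm (y + z) - b" if "(x,a) \<in> G" "(y,b) \<in> G" for x a y b
  proof -
    have "a + b \<le> norm (x + y)"
      using dominated_linear_graph_bound[OF G dominated_linear_graph_add[OF G that]] by simp
    also have "\<dots> \<le> norm (x - z) + norm (y + z)"
      using norm_triangle_ineq[of "x - z" "y + z"] by simp
    finally show ?thesis by simp
  qed
  have bdd: "bdd_above S"
    by (rule bdd_aboveI[of _ "norm z"]) (use key[of _ _ 0 0] G0 in \<open>auto simp: S_def\<close>)
  have low: "a - norm (x - z) \<le> Sup S" if "(x,a) \<in> G" for x a
    by (rule cSup_upper[OF _ bdd]) (use that S_def in blast)
  have up: "Sup S \<le> norm (y + z) - b" if "(y,b) \<in> G" for y b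
    by (rule cSup_least) (use that key G0 S_def in blast)+
  have "\<bar>b + Sup S\<bar> \<le> norm (y + z)" if yb: "(y,b) \<in> G" for y b
  proof -
    have "(-y, -b) \<in> G" using dominated_linear_graph_scaleR[OF G yb, of "-1"] by simp
    from low[OF this] have "-b - norm (y + z) \<le> Sup S"
      using norm_minus_cancel[of "y + z"] by simp
    with up[OF yb] show ?thesis by linarith
  qed
  then show thesis by (rule that)
qed

lemma dominated_linear_graph_extend:
  assumes G: "dominated_linear_graph G" and z: "\<forall>a. (z,a) \<notin> G"
    and c: "\<And>y b. (y,b) \<in> G \<Longrightarrow> \<bar>b + c\<bar> \<le> norm (y + z)"
  shows "dominated_linear_graph {(x + t *\<^sub>R z, a + t * c) | x a t. (x,a) \<in> G}"
    (is "dominated_linear_graph ?G'")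
  unfolding dominated_linear_graph_def
proof (intro conjI allI impI)
  fix x a b assume "(x,a) \<in> ?G'" "(x,b) \<in> ?G'"
  then obtain x1 a1 t1 x2 a2 t2 where e: "(x1,a1) \<in> G" "x = x1 + t1 *\<^sub>R z" "a = a1 + t1 * c"
    "(x2,a2) \<in> G" "x = x2 + t2 *\<^sub>R z" "b = a2 + t2 * c" by blast
  show "a = b"
  proof (cases "t1 = t2")
    case True
    then show ?thesis using e dominated_linear_graph_unique[OF G] by simp
  next
    case False
    have "(x2 + (-1) *\<^sub>R x1, a2 + (-1) * a1) \<in> G"
      using e by (intro dominated_linear_graph_add[OF G] dominated_linear_graph_scaleR[OF G])
    from dominated_linear_graph_scaleR[OF G this, of "1 / (t1 - t2)"]
    have "((1 / (t1 - t2)) *\<^sub>R (x2 - x1), (a2 - a1) / (t1 - t2)) \<in> G" by simp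
    moreover have "x2 - x1 = (t1 - t2) *\<^sub>R z" using e by (simp add: algebra_simps)
    ultimately have "(z, (a2 - a1) / (t1 - t2)) \<in> G" using False by simp
    with z show ?thesis by blast
  qed
next
  fix x a y b assume "(x,a) \<in> ?G'" "(y,b) \<in> ?G'"
  then obtain x1 a1 t1 x2 a2 t2 where e: "(x1,a1) \<in> G" "x = x1 + t1 *\<^sub>R z" "a = a1 + t1 * c"
    "(x2,a2) \<in> G" "y = x2 + t2 *\<^sub>R z" "b = a2 + t2 * c" by blast
  then have "(x1 + x2, a1 + a2) \<in> G" using dominated_linear_graph_add[OF G] by blast
  moreover have "(x + y, a + b) = ((x1 + x2) + (t1 + t2) *\<^sub>R z, (a1 + a2) + (t1 + t2) * c)"
    using e by (simp add: algebra_simps)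
  ultimately show "(x + y, a + b) \<in> ?G'" by blast
next
  fix x a r assume "(x,a) \<in> ?G'"
  then obtain x1 a1 t where e: "(x1,a1) \<in> G" "x = x1 + t *\<^sub>R z" "a = a1 + t * c" by blast
  then have "(r *\<^sub>R x1, r * a1) \<in> G" using dominated_linear_graph_scaleR[OF G] by blast
  moreover have "(r *\<^sub>R x, r * a) = (r *\<^sub>R x1 + (r * t) *\<^sub>R z, r * a1 + (r * t) * c)"
    using e by (simp add: algebra_simps)
  ultimately show "(r *\<^sub>R x, r * a) \<in> ?G'" by blast
next
  fix x a assume "(x,a) \<in> ?G'"
  then obtain x1 a1 t where e: "(x1,a1) \<in> G" "x = x1 + t *\<^sub>R z" "a = a1 + t * c" by blast
  show "\<bar>a\<bar> \<le> norm x"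
  proof (cases "t = 0")
    case True
    then show ?thesis using e dominated_linear_graph_bound[OF G] by simp
  next
    case False
    have "((1/t) *\<^sub>R x1, (1/t) * a1) \<in> G" using dominated_linear_graph_scaleR[OF G e(1)] .
    from mult_left_mono[OF c[OF this] abs_ge_zero[of t]]
    have "\<bar>t * ((1/t) * a1 + c)\<bar> \<le> norm (t *\<^sub>R ((1/t) *\<^sub>R x1 + z))"
      by (simp add: abs_mult)
    then show ?thesis using False e by (simp add: algebra_simps)
  qed
qed

lemma dominated_linear_graph_chain_Union:
  assumes "subset.chain {G. dominated_linear_graph G} C"
  shows "dominated_linear_graph (\<Union>C)"
proof -
  have good: "\<And>G. G \<in> C \<Longrightarrow> dominated_linear_graph G"
    and two: "\<And>p q. p \<in> \<Union>C \<Longrightarrow> q \<in> \<Union>C \<Longrightarrow> \<exists>G\<in>C. p \<in> G \<and> q \<in> G"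
    using assms unfolding subset.chain_def by blast+
  show ?thesis
    unfolding dominated_linear_graph_def
  proof (intro conjI allI impI)
    fix x a b assume "(x,a) \<in> \<Union>C" "(x,b) \<in> \<Union>C"
    then obtain G where "G \<in> C" "(x,a) \<in> G" "(x,b) \<in> G" using two by blast
    then show "a = b" using good dominated_linear_graph_unique by blast
  next
    fix x a y b assume "(x,a) \<in> \<Union>C" "(y,b) \<in> \<Union>C"
    then obtain G where "G \<in> C" "(x,a) \<in> G" "(y,b) \<in> G" using two by blast
    then show "(x + y, a + b) \<in> \<Union>C" using good dominated_linear_graph_add by blast
  next
    fix x a r assume "(x,a) \<in> \<Union>C"
    then show "(r *\<^sub>R x, r * a) \<in> \<Union>C" using good dominated_linear_graph_scaleR by blast
  next
    fix x a assume "(x,a) \<in> \<Union>C"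
    then show "\<bar>a\<bar> \<le> norm x" using good dominated_linear_graph_bound by blast
  qed
qed

lemma dominated_linear_graph_total_blinfun:
  assumes G: "dominated_linear_graph G" and tot: "\<And>x. \<exists>a. (x,a) \<in> G"
  shows "\<exists>x' :: 'b::real_normed_vector \<Rightarrow>\<^sub>L real. norm x' \<le> 1 \<and> (\<forall>(x,a) \<in> G. blinfun_apply x' x = a)"
proof -
  define f where "f x = (THE a. (x,a) \<in> G)" for x
  have "\<exists>!a. (x,a) \<in> G" for x using tot dominated_linear_graph_unique[OF G] by blast
  then have fG: "(x, f x) \<in> G" for x unfolding f_def by (rule theI')
  have f_eq: "(x,a) \<in> G \<Longrightarrow> f x = a" for x a using fG dominated_linear_graph_unique[OF G] by blast
  have "bounded_linear f"
  proof (rule bounded_linear_intro[where K=1])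
    show "f (x + y) = f x + f y" for x y by (rule f_eq[OF dominated_linear_graph_add[OF G fG fG]])
    show "f (r *\<^sub>R x) = r *\<^sub>R f x" for r x using f_eq[OF dominated_linear_graph_scaleR[OF G fG]] by simp
    show "norm (f x) \<le> norm x * 1" for x using dominated_linear_graph_bound[OF G fG] by simp
  qed
  then have ap: "blinfun_apply (Blinfun f) = f" by (simp add: bounded_linear_Blinfun_apply)
  have "norm (Blinfun f) \<le> 1"
    by (rule norm_blinfun_bound) (use dominated_linear_graph_bound[OF G fG] ap in auto)
  then show ?thesis using ap f_eq by auto
qed

lemma dominated_linear_graph_line:
  fixes w :: "'b::real_normed_vector"
  shows "dominated_linear_graph {(t *\<^sub>R w, t * norm w) | t. True}"
  unfolding dominated_linear_graph_def
proof (intro conjI allI impI)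
  fix x a b assume "(x,a) \<in> {(t *\<^sub>R w, t * norm w) |t. True}" "(x,b) \<in> {(t *\<^sub>R w, t * norm w) |t. True}"
  then obtain t s where "x = t *\<^sub>R w" "a = t * norm w" "x = s *\<^sub>R w" "b = s * norm w" by blast
  then show "a = b" by (cases "w = 0") auto
next
  fix x a y b assume "(x,a) \<in> {(t *\<^sub>R w, t * norm w) |t. True}" "(y,b) \<in> {(t *\<^sub>R w, t * norm w) |t. True}"
  then obtain t s where "x = t *\<^sub>R w" "a = t * norm w" "y = s *\<^sub>R w" "b = s * norm w" by blast
  then show "(x + y, a + b) \<in> {(t *\<^sub>R w, t * norm w) |t. True}"
    by (intro CollectI exI[of _ "t + s"]) (simp add: algebra_simps)
next
  fix x a r assume "(x,a) \<in> {(t *\<^sub>R w, t * norm w) |t. True}"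
  then obtain t where "x = t *\<^sub>R w" "a = t * norm w" by blast
  then show "(r *\<^sub>R x, r * a) \<in> {(t *\<^sub>R w, t * norm w) |t. True}"
    by (intro CollectI exI[of _ "r * t"]) simp
qed (auto simp: abs_mult)

lemma exists_norming_functional:
  fixes w :: "'b::real_normed_vector"
  obtains x' :: "'b \<Rightarrow>\<^sub>L real" where "norm x' \<le> 1" "blinfun_apply x' w = norm w"
proof -
  define L where "L = {(t *\<^sub>R w, t * norm w) | t. True}"
  have L: "dominated_linear_graph L" unfolding L_def by (rule dominated_linear_graph_line)
  define A where "A = {G. dominated_linear_graph G \<and> L \<subseteq> G}"
  have "\<exists>G\<in>A. \<forall>G'\<in>A. G \<subseteq> G' \<longrightarrow> G' = G"
  proof (rule subset_Zorn_nonempty)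
    fix C assume "C \<noteq> {}" "subset.chain A C"
    then have "subset.chain {G. dominated_linear_graph G} C" and "L \<subseteq> \<Union>C"
      unfolding A_def subset.chain_def by blast+
    then show "\<Union>C \<in> A" unfolding A_def using dominated_linear_graph_chain_Union by blast
  qed (use L A_def in blast)
  then obtain G where "G \<in> A" and max_A: "\<forall>G'\<in>A. G \<subseteq> G' \<longrightarrow> G' = G" by blast
  then have G: "dominated_linear_graph G" "L \<subseteq> G" unfolding A_def by auto
  have max: "G' = G" if "dominated_linear_graph G'" "G \<subseteq> G'" for G'
    using max_A that G(2) unfolding A_def by blast
  have Lt: "(t *\<^sub>R w, t * norm w) \<in> G" for t using G(2) unfolding L_def by blast
  from Lt[of 0] have zero: "(0,0) \<in> G" by simp
  have total: "\<exists>a. (z,a) \<in> G" for z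
  proof (rule ccontr)
    assume "\<nexists>a. (z,a) \<in> G"
    then have z: "\<forall>a. (z,a) \<notin> G" by blast
    obtain c where c: "\<And>y b. (y,b) \<in> G \<Longrightarrow> \<bar>b + c\<bar> \<le> norm (y + z)"
      using dominated_linear_graph_extension_value[OF G(1) zero] by blast
    define G' where "G' = {(x + t *\<^sub>R z, a + t * c) | x a t. (x,a) \<in> G}"
    have "dominated_linear_graph G'"
      unfolding G'_def by (rule dominated_linear_graph_extend[OF G(1) z c])
    moreover have "G \<subseteq> G'" unfolding G'_def by (force intro: exI[of _ 0])
    ultimately have "G' = G" by (rule max)
    moreover have "(z,c) \<in> G'" unfolding G'_def using zero by (force intro: exI[of _ 1])
    ultimately show False using z by blast
  qed
  obtain x' :: "'b \<Rightarrow>\<^sub>L real" where "norm x' \<le> 1" "\<forall>(x,a) \<in> G. blinfun_apply x' x = a"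
    using dominated_linear_graph_total_blinfun[OF G(1) total] by blast
  moreover have "(w, norm w) \<in> G" using Lt[of 1] by simp
  ultimately show thesis using that by auto
qed

lemma blinfun_real_separates:
  fixes e1 e2 :: "'b::real_normed_vector"
  assumes "\<And>x'::'b \<Rightarrow>\<^sub>L real. blinfun_apply x' e1 = blinfun_apply x' e2"
  shows "e1 = e2"
proof -
  obtain x'::"'b \<Rightarrow>\<^sub>L real" where "blinfun_apply x' (e1 - e2) = norm (e1 - e2)"
    using exists_norming_functional by blast
  then show ?thesis using assms[of x'] by (simp add: blinfun.diff_right)
qed

section \<open>Jordan decomposition of a charge on a \<open>\<delta>\<close>-ring\<close>

lemma ennreal_sum_le_sum_ennreal: "ennreal (sum f I) \<le> (\<Sum>i\<in>I. ennreal (f i))"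
proof -
  have "ennreal (sum f I) \<le> ennreal (sum (\<lambda>i. max (f i) 0) I)"
    by (intro ennreal_leI sum_mono) simp
  also have "\<dots> = (\<Sum>i\<in>I. ennreal (max (f i) 0))" by (subst sum_ennreal) auto
  also have "\<dots> = (\<Sum>i\<in>I. ennreal (f i))" by (intro sum.cong refl) (simp add: max_def ennreal_neg)
  finally show ?thesis .
qed

lemma nn_integral_measure_add:
  assumes sN: "sets N = sets M" and sP: "sets P = sets M" and sQ: "sets Q = sets M"
    and eq: "\<And>A. A \<in> sets M \<Longrightarrow> emeasure N A = emeasure P A + emeasure Q A"
    and f: "f \<in> borel_measurable M"
  shows "(\<integral>\<^sup>+x. f x \<partial>N) = (\<integral>\<^sup>+x. f x \<partial>P) + (\<integral>\<^sup>+x. f x \<partial>Q)"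
  using f
proof (induction rule: borel_measurable_induct)
  case (cong f g)
  have spN: "space N = space M" "space P = space M" "space Q = space M"
    using sN sP sQ sets_eq_imp_space_eq by blast+
  have "(\<integral>\<^sup>+x. f x \<partial>N) = (\<integral>\<^sup>+x. g x \<partial>N)" "(\<integral>\<^sup>+x. f x \<partial>P) = (\<integral>\<^sup>+x. g x \<partial>P)"
    "(\<integral>\<^sup>+x. f x \<partial>Q) = (\<integral>\<^sup>+x. g x \<partial>Q)"
    by (intro nn_integral_cong; simp add: spN cong(3))+
  then show ?case using cong by simp
next
  case (set A)
  then show ?case using eq sN sP sQ by (simp add: nn_integral_indicator)
next
  case (mult u c)
  have m: "u \<in> borel_measurable N" "u \<in> borel_measurable P" "u \<in> borel_measurable Q"
    using mult measurable_cong_sets[OF _ refl] sN sP sQ by blast+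
  show ?case using mult by (simp add: nn_integral_cmult[OF m(1)] nn_integral_cmult[OF m(2)]
      nn_integral_cmult[OF m(3)] distrib_left)
next
  case (add u v)
  have m: "u \<in> borel_measurable N" "u \<in> borel_measurable P" "u \<in> borel_measurable Q"
    "v \<in> borel_measurable N" "v \<in> borel_measurable P" "v \<in> borel_measurable Q"
    using add measurable_cong_sets[OF _ refl] sN sP sQ by blast+
  show ?case using add by (simp add: nn_integral_add m add_ac)
next
  case (seq U)
  have m: "\<And>i. U i \<in> borel_measurable N" "\<And>i. U i \<in> borel_measurable P" "\<And>i. U i \<in> borel_measurable Q"
    using seq measurable_cong_sets[OF _ refl] sN sP sQ by blast+
  have e: "(\<integral>\<^sup>+x. (SUP i. U i x) \<partial>K) = (SUP i. \<integral>\<^sup>+x. U i x \<partial>K)" if "\<And>i. U i \<in> borel_measurable K" for K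
    using nn_integral_monotone_convergence_SUP[OF \<open>incseq U\<close> that] .
  have inc: "incseq (\<lambda>i. \<integral>\<^sup>+x. U i x \<partial>K)" for K
    using \<open>incseq U\<close> by (auto simp: incseq_def le_fun_def intro!: nn_integral_mono)
  have fe: "(SUP i. U i) = (\<lambda>x. SUP i. U i x)" by (simp add: fun_eq_iff image_comp)
  have IH: "\<And>i. (\<integral>\<^sup>+x. U i x \<partial>N) = (\<integral>\<^sup>+x. U i x \<partial>P) + (\<integral>\<^sup>+x. U i x \<partial>Q)" using seq by simp
  show ?case unfolding fe e[OF m(1)] e[OF m(2)] e[OF m(3)] IH
    by (rule ennreal_SUP_add[OF inc inc])
qed

locale delta_ring_charge =
  fixes M :: "'a measure" and R :: "'a set set" and \<nu> :: "'a set \<Rightarrow> real"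
  assumes R_sets: "R \<subseteq> sets M"
    and R_empty: "{} \<in> R"
    and R_subset: "\<And>B C. B \<in> R \<Longrightarrow> C \<in> sets M \<Longrightarrow> C \<subseteq> B \<Longrightarrow> C \<in> R"
    and R_Un: "\<And>B C. B \<in> R \<Longrightarrow> C \<in> R \<Longrightarrow> B \<union> C \<in> R"
    and charge_add: "\<And>B C. B \<in> R \<Longrightarrow> C \<in> R \<Longrightarrow> B \<inter> C = {} \<Longrightarrow> \<nu> (B \<union> C) = \<nu> B + \<nu> C"
    and charge_sums: "\<And>A. range A \<subseteq> R \<Longrightarrow> disjoint_family A \<Longrightarrow> (\<Union>i. A i) \<in> R \<Longrightarrow>
      (\<lambda>i. \<nu> (A i)) sums \<nu> (\<Union>i. A i)"
    and charge_bounded: "\<And>B. B \<in> R \<Longrightarrow> \<exists>K. \<forall>C\<in>R. C \<subseteq> B \<longrightarrow> \<bar>\<nu> C\<bar> \<le> K"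
begin

definition pos_var :: "'a set \<Rightarrow> ennreal" where
  "pos_var A = (SUP B\<in>{B \<in> R. B \<subseteq> A}. ennreal (\<nu> B))"

lemma charge_empty: "\<nu> {} = 0" using charge_add[OF R_empty R_empty] by simp

lemma R_Diff: "B \<in> R \<Longrightarrow> C \<in> sets M \<Longrightarrow> B - C \<in> R"
  by (rule R_subset[of B]) (use R_sets in auto)

lemma R_Int: "B \<in> R \<Longrightarrow> C \<in> sets M \<Longrightarrow> B \<inter> C \<in> R"
  by (rule R_subset[of B]) (use R_sets in auto)

lemma pos_var_mono: "A \<subseteq> A' \<Longrightarrow> pos_var A \<le> pos_var A'"
  unfolding pos_var_def by (rule SUP_subset_mono) auto

lemma pos_var_empty: "pos_var {} = 0"
proof -
  have "{B \<in> R. B \<subseteq> {}} = {{}}" using R_empty by auto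
  then show ?thesis unfolding pos_var_def by (simp add: charge_empty)
qed

lemma ennreal_charge_nonneg_witness: "B \<in> R \<Longrightarrow> \<exists>B'\<in>R. B' \<subseteq> B \<and> ennreal (\<nu> B) = ennreal (\<nu> B') \<and> 0 \<le> \<nu> B'"
proof (cases "0 \<le> \<nu> B")
  case False
  then show "\<exists>B'\<in>R. B' \<subseteq> B \<and> ennreal (\<nu> B) = ennreal (\<nu> B') \<and> 0 \<le> \<nu> B'"
    by (intro bexI[of _ "{}"]) (auto simp: R_empty charge_empty ennreal_neg)
qed auto

lemma ennreal_charge_add_le_pos_var:
  assumes B: "B \<in> R" "B \<subseteq> A" and C: "C \<in> R" "C \<subseteq> A'" and "A \<inter> A' = {}"
  shows "ennreal (\<nu> B) + ennreal (\<nu> C) \<le> pos_var (A \<union> A')"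
proof -
  obtain B' where B': "B' \<in> R" "B' \<subseteq> B" "ennreal (\<nu> B) = ennreal (\<nu> B')" "0 \<le> \<nu> B'"
    using ennreal_charge_nonneg_witness B by blast
  obtain C' where C': "C' \<in> R" "C' \<subseteq> C" "ennreal (\<nu> C) = ennreal (\<nu> C')" "0 \<le> \<nu> C'"
    using ennreal_charge_nonneg_witness C by blast
  have "B' \<inter> C' = {}" using B C B' C' assms(5) by blast
  then have "ennreal (\<nu> B) + ennreal (\<nu> C) = ennreal (\<nu> (B' \<union> C'))"
    using B' C' charge_add[OF B'(1) C'(1)] by simp
  also have "\<dots> \<le> pos_var (A \<union> A')" unfolding pos_var_def
    by (rule SUP_upper) (use B C B' C' R_Un in blast)
  finally show ?thesis .
qed

lemma pos_var_superadditive: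
  assumes "A \<inter> A' = {}"
  shows "pos_var A + pos_var A' \<le> pos_var (A \<union> A')"
proof -
  have ne: "{B \<in> R. B \<subseteq> A} \<noteq> {}" "{B \<in> R. B \<subseteq> A'} \<noteq> {}" using R_empty by auto
  have "pos_var A + pos_var A' = (SUP B\<in>{B \<in> R. B \<subseteq> A}. ennreal (\<nu> B) + pos_var A')"
    unfolding pos_var_def[of A] by (rule ennreal_SUP_add_left[symmetric, OF ne(1)])
  also have "\<dots> \<le> pos_var (A \<union> A')"
  proof (rule SUP_least)
    fix B assume "B \<in> {B \<in> R. B \<subseteq> A}"
    then show "ennreal (\<nu> B) + pos_var A' \<le> pos_var (A \<union> A')"
      unfolding pos_var_def[of A'] ennreal_SUP_add_right[OF ne(2)]
      using ennreal_charge_add_le_pos_var assms by (intro SUP_least) auto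
  qed
  finally show ?thesis .
qed

lemma pos_var_finite: "B \<in> R \<Longrightarrow> pos_var B < \<infinity>"
proof -
  assume B: "B \<in> R"
  obtain K where K: "\<forall>C\<in>R. C \<subseteq> B \<longrightarrow> \<bar>\<nu> C\<bar> \<le> K" using charge_bounded[OF B] by blast
  have "pos_var B \<le> ennreal K" unfolding pos_var_def
    by (rule SUP_least) (use K in \<open>auto intro!: ennreal_leI\<close>)
  also have "ennreal K < \<infinity>" by simp
  finally show ?thesis .
qed

lemma sum_pos_var_le:
  fixes A :: "nat \<Rightarrow> 'a set"
  assumes "disjoint_family A"
  shows "(\<Sum>i<n. pos_var (A i)) \<le> pos_var (\<Union>i<n. A i)"
proof (induction n)
  case 0 then show ?case by (simp add: pos_var_empty)
next
  case (Suc n)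
  have "(\<Sum>i<Suc n. pos_var (A i)) \<le> pos_var (\<Union>i<n. A i) + pos_var (A n)"
    using Suc by (simp add: add_right_mono)
  also have "\<dots> \<le> pos_var ((\<Union>i<n. A i) \<union> A n)"
    using assms unfolding disjoint_family_on_def by (intro pos_var_superadditive) (auto dest: less_imp_neq)
  also have "(\<Union>i<n. A i) \<union> A n = (\<Union>i<Suc n. A i)" by (auto simp: lessThan_Suc)
  finally show ?case .
qed

lemma pos_var_UN_le_suminf:
  fixes A :: "nat \<Rightarrow> 'a set"
  assumes A: "range A \<subseteq> sets M" "disjoint_family A"
  shows "pos_var (\<Union>i. A i) \<le> (\<Sum>i. pos_var (A i))"
  unfolding pos_var_def[of "\<Union>i. A i"]
proof (rule SUP_least)
  fix B assume B: "B \<in> {B \<in> R. B \<subseteq> (\<Union>i. A i)}"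
  define C where "C i = B \<inter> A i" for i
  have CR: "range C \<subseteq> R" using B A R_Int unfolding C_def by auto
  have "disjoint_family C" using A(2) unfolding C_def disjoint_family_on_def by blast
  moreover have "(\<Union>i. C i) = B" using B unfolding C_def by blast
  ultimately have "(\<lambda>i. \<nu> (C i)) sums \<nu> B" using charge_sums[OF CR] B by simp
  then have lim: "(\<lambda>n. ennreal (\<Sum>i<n. \<nu> (C i))) \<longlonglongrightarrow> ennreal (\<nu> B)"
    unfolding sums_def by (rule tendsto_ennrealI)
  have "ennreal (\<Sum>i<n. \<nu> (C i)) \<le> (\<Sum>i. pos_var (A i))" for n
  proof -
    have "ennreal (\<Sum>i<n. \<nu> (C i)) \<le> (\<Sum>i<n. ennreal (\<nu> (C i)))"
      by (rule ennreal_sum_le_sum_ennreal)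
    also have "\<dots> \<le> (\<Sum>i<n. pos_var (A i))" unfolding pos_var_def
      by (intro sum_mono SUP_upper) (use CR C_def in auto)
    also have "\<dots> \<le> (\<Sum>i. pos_var (A i))" by (rule sum_le_suminf) auto
    finally show ?thesis .
  qed
  then show "ennreal (\<nu> B) \<le> (\<Sum>i. pos_var (A i))"
    using Lim_bounded[OF lim, of 0] by blast
qed

lemma pos_var_countably_additive: "countably_additive (sets M) pos_var"
  unfolding countably_additive_def
proof (intro allI impI)
  fix A :: "nat \<Rightarrow> 'a set" assume A: "range A \<subseteq> sets M" "disjoint_family A" "(\<Union>i. A i) \<in> sets M"
  have "(\<Sum>i. pos_var (A i)) \<le> pos_var (\<Union>i. A i)"
    unfolding suminf_eq_SUP
  proof (rule SUP_least)
    fix n :: nat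
    have "(\<Union>i<n. A i) \<subseteq> (\<Union>i. A i)" by blast
    then show "(\<Sum>i<n. pos_var (A i)) \<le> pos_var (\<Union>i. A i)"
      using sum_pos_var_le[OF A(2)] pos_var_mono order_trans by blast
  qed
  then show "(\<Sum>i. pos_var (A i)) = pos_var (\<Union>i. A i)"
    using pos_var_UN_le_suminf[OF A(1,2)] by (rule antisym)
qed

lemma pos_var_positive: "positive (sets M) pos_var"
  unfolding positive_def by (simp add: pos_var_empty)

lemma emeasure_sm_pos: "A \<in> sets M \<Longrightarrow> emeasure (sm_pos M R \<nu>) A = pos_var A"
  unfolding sm_pos_def pos_var_def[symmetric]
  using emeasure_measure_of_sigma[OF sets.sigma_algebra_axioms pos_var_positive pos_var_countably_additive] by blast

lemma sets_sm_pos[simp]: "sets (sm_pos M R \<nu>) = sets M"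
  unfolding sm_pos_def using sets.sets_into_space by (subst sets_measure_of) (auto simp: sets.sigma_sets_eq)

lemma space_sm_pos[simp]: "space (sm_pos M R \<nu>) = space M"
  unfolding sm_pos_def by simp

lemma delta_ring_charge_uminus: "delta_ring_charge M R (\<lambda>B. - \<nu> B)"
proof
  show "\<And>B C. B \<in> R \<Longrightarrow> C \<in> R \<Longrightarrow> B \<inter> C = {} \<Longrightarrow> - \<nu> (B \<union> C) = - \<nu> B + - \<nu> C"
    using charge_add by simp
  show "\<And>A. range A \<subseteq> R \<Longrightarrow> disjoint_family A \<Longrightarrow> (\<Union>i. A i) \<in> R \<Longrightarrow> (\<lambda>i. - \<nu> (A i)) sums - \<nu> (\<Union>i. A i)"
    using charge_sums sums_minus by blast
  show "\<And>B. B \<in> R \<Longrightarrow> \<exists>K. \<forall>C\<in>R. C \<subseteq> B \<longrightarrow> \<bar>- \<nu> C\<bar> \<le> K"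
    using charge_bounded by simp
qed (use R_sets R_empty R_subset R_Un in auto)

definition neg_var :: "'a set \<Rightarrow> ennreal" where
  "neg_var A = (SUP B\<in>{B \<in> R. B \<subseteq> A}. ennreal (- \<nu> B))"

lemma neg_var_eq_pos_var: "neg_var = delta_ring_charge.pos_var R (\<lambda>B. - \<nu> B)"
  unfolding neg_var_def delta_ring_charge.pos_var_def[OF delta_ring_charge_uminus] by simp

lemma sm_neg_eq_sm_pos: "sm_neg M R \<nu> = sm_pos M R (\<lambda>B. - \<nu> B)"
  unfolding sm_neg_def sm_pos_def by simp

lemma bdd_above_charge:
  assumes B: "B \<in> R" and f: "\<And>x. f x \<le> \<bar>x\<bar>"
  shows "bdd_above ((\<lambda>C. f (\<nu> C)) ` {C \<in> R. C \<subseteq> B})"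
proof -
  obtain K where K: "\<forall>C\<in>R. C \<subseteq> B \<longrightarrow> \<bar>\<nu> C\<bar> \<le> K" using charge_bounded[OF B] by blast
  show ?thesis by (rule bdd_aboveI[of _ K]) (use K f in \<open>auto intro: order_trans\<close>)
qed

lemma pos_var_eq_SUP:
  assumes B: "B \<in> R"
  shows "pos_var B = ennreal (SUP C\<in>{C \<in> R. C \<subseteq> B}. \<nu> C)"
proof (rule antisym)
  have bd: "bdd_above ((\<lambda>C. \<nu> C) ` {C \<in> R. C \<subseteq> B})" using bdd_above_charge[OF B, of "\<lambda>x. x"] by simp
  show "pos_var B \<le> ennreal (SUP C\<in>{C \<in> R. C \<subseteq> B}. \<nu> C)" unfolding pos_var_def
    by (rule SUP_least, rule ennreal_leI, rule cSUP_upper[OF _ bd]) auto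
  obtain q where q: "pos_var B = ennreal q" "0 \<le> q" using pos_var_finite[OF B]
    by (cases "pos_var B") auto
  have "\<nu> C \<le> q" if "C \<in> R" "C \<subseteq> B" for C
  proof -
    have "ennreal (\<nu> C) \<le> pos_var B" unfolding pos_var_def by (rule SUP_upper) (use that in auto)
    then show ?thesis using q by (simp add: ennreal_le_iff)
  qed
  then have "(SUP C\<in>{C \<in> R. C \<subseteq> B}. \<nu> C) \<le> q"
    by (intro cSUP_least) (use R_empty in auto)
  then show "ennreal (SUP C\<in>{C \<in> R. C \<subseteq> B}. \<nu> C) \<le> pos_var B" using q by (simp add: ennreal_leI)
qed

lemma neg_var_eq_SUP:
  assumes B: "B \<in> R"
  shows "neg_var B = ennreal (SUP C\<in>{C \<in> R. C \<subseteq> B}. - \<nu> C)"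
  using delta_ring_charge.pos_var_eq_SUP[OF delta_ring_charge_uminus B] unfolding neg_var_eq_pos_var .

lemma jordan_decomposition:
  assumes B: "B \<in> R"
  shows "enn2real (pos_var B) - enn2real (neg_var B) = \<nu> B"
proof -
  let ?RB = "{C \<in> R. C \<subseteq> B}"
  define p where "p = (SUP C\<in>?RB. \<nu> C)"
  define n where "n = (SUP C\<in>?RB. - \<nu> C)"
  have ne: "?RB \<noteq> {}" using R_empty by auto
  have bd: "bdd_above ((\<lambda>C. \<nu> C) ` ?RB)" using bdd_above_charge[OF B, of "\<lambda>x. x"] by simp
  have bdn: "bdd_above ((\<lambda>C. - \<nu> C) ` ?RB)" using bdd_above_charge[OF B, of "\<lambda>x. - x"] by simp
  have p0: "0 \<le> p" unfolding p_def using cSUP_upper[OF _ bd, of "{}"] R_empty charge_empty by simp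
  have n0: "0 \<le> n" unfolding n_def using cSUP_upper[OF _ bdn, of "{}"] R_empty charge_empty by simp
  have split: "\<nu> B = \<nu> C + \<nu> (B - C)" if "C \<in> R" "C \<subseteq> B" for C
  proof -
    have "B = C \<union> (B - C)" using that by blast
    moreover have "B - C \<in> R" using R_Diff B that R_sets by blast
    ultimately show ?thesis using charge_add[OF that(1), of "B - C"] by (metis Diff_disjoint)
  qed
  have diffR: "C \<in> R \<Longrightarrow> C \<subseteq> B \<Longrightarrow> B - C \<in> ?RB" for C using R_Diff B R_sets by blast
  have "n \<le> p - \<nu> B" unfolding n_def
  proof (rule cSUP_least[OF ne])
    fix C assume C: "C \<in> ?RB"
    have "\<nu> (B - C) \<le> p" unfolding p_def by (rule cSUP_upper[OF _ bd]) (use diffR C in auto)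
    then show "- \<nu> C \<le> p - \<nu> B" using split C by auto
  qed
  moreover have "p \<le> n + \<nu> B" unfolding p_def
  proof (rule cSUP_least[OF ne])
    fix C assume C: "C \<in> ?RB"
    have "- \<nu> (B - C) \<le> n" unfolding n_def by (rule cSUP_upper[OF _ bdn]) (use diffR C in auto)
    then show "\<nu> C \<le> n + \<nu> B" using split C by auto
  qed
  ultimately have "n = p - \<nu> B" by simp
  then show ?thesis using pos_var_eq_SUP[OF B] neg_var_eq_SUP[OF B] p0 n0 p_def n_def by simp
qed

lemma charge_Union: "finite F \<Longrightarrow> F \<subseteq> R \<Longrightarrow> disjoint F \<Longrightarrow> \<Union>F \<in> R \<and> \<nu> (\<Union>F) = (\<Sum>B\<in>F. \<nu> B)"
proof (induction F rule: finite_induct)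
  case empty then show ?case by (simp add: R_empty charge_empty)
next
  case (insert B F)
  have dF: "disjoint F" using insert.prems(2) by (simp add: pairwise_insert)
  have IH: "\<Union>F \<in> R \<and> \<nu> (\<Union>F) = (\<Sum>B\<in>F. \<nu> B)" using insert dF by blast
  have "B \<inter> \<Union>F = {}"
  proof -
    have "\<forall>C\<in>F. disjnt B C" using insert.prems(2) insert.hyps(2) by (auto simp: pairwise_insert)
    then show ?thesis by (auto simp: disjnt_def)
  qed
  then show ?case using IH insert charge_add[of B "\<Union>F"] R_Un[of B "\<Union>F"] by simp
qed

definition tot_var :: "'a set \<Rightarrow> ennreal" where
  "tot_var A = (SUP F\<in>{F. finite F \<and> F \<subseteq> R \<and> disjoint F \<and> (\<forall>B\<in>F. B \<subseteq> A)}. ennreal (\<Sum>B\<in>F. \<bar>\<nu> B\<bar>))"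

lemma tot_var_le: "tot_var A \<le> pos_var A + neg_var A"
  unfolding tot_var_def
proof (rule SUP_least)
  fix F assume F: "F \<in> {F. finite F \<and> F \<subseteq> R \<and> disjoint F \<and> (\<forall>B\<in>F. B \<subseteq> A)}"
  define Fp where "Fp = {B\<in>F. 0 \<le> \<nu> B}"
  define Fm where "Fm = {B\<in>F. \<not> 0 \<le> \<nu> B}"
  have Fs: "finite F" "F \<subseteq> R" "disjoint F" "\<forall>B\<in>F. B \<subseteq> A" using F by auto
  have sub0: "Fp \<subseteq> F" "Fm \<subseteq> F" unfolding Fp_def Fm_def by auto
  have fin: "finite Fp" "finite Fm" using Fs(1) sub0 finite_subset by blast+
  have dp: "disjoint Fp" "disjoint Fm" using Fs(3) sub0 pairwise_subset by blast+
  have Up: "\<Union>Fp \<in> R \<and> \<nu> (\<Union>Fp) = (\<Sum>B\<in>Fp. \<nu> B)"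
    by (rule charge_Union[OF fin(1) _ dp(1)]) (use Fs(2) sub0 in blast)
  have Um: "\<Union>Fm \<in> R \<and> \<nu> (\<Union>Fm) = (\<Sum>B\<in>Fm. \<nu> B)"
    by (rule charge_Union[OF fin(2) _ dp(2)]) (use Fs(2) sub0 in blast)
  have "(\<Sum>B\<in>F. \<bar>\<nu> B\<bar>) = (\<Sum>B\<in>Fp. \<bar>\<nu> B\<bar>) + (\<Sum>B\<in>Fm. \<bar>\<nu> B\<bar>)"
  proof -
    have "F = Fp \<union> Fm" "Fp \<inter> Fm = {}" unfolding Fp_def Fm_def by auto
    then show ?thesis using sum.union_disjoint[OF fin] by simp
  qed
  also have "(\<Sum>B\<in>Fp. \<bar>\<nu> B\<bar>) = \<nu> (\<Union>Fp)" using Up by (simp add: Fp_def)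
  also have "(\<Sum>B\<in>Fm. \<bar>\<nu> B\<bar>) = - \<nu> (\<Union>Fm)" using Um by (simp add: Fm_def sum_negf[symmetric])
  finally have eq: "(\<Sum>B\<in>F. \<bar>\<nu> B\<bar>) = \<nu> (\<Union>Fp) + - \<nu> (\<Union>Fm)" .
  have "0 \<le> (\<Sum>B\<in>Fp. \<nu> B)" unfolding Fp_def by (rule sum_nonneg) simp
  then have nn1: "0 \<le> \<nu> (\<Union>Fp)" using Up by simp
  have "(\<Sum>B\<in>Fm. \<nu> B) \<le> 0" unfolding Fm_def by (rule sum_nonpos) simp
  then have nn2: "\<nu> (\<Union>Fm) \<le> 0" using Um by simp
  have nn: "0 \<le> \<nu> (\<Union>Fp)" "0 \<le> - \<nu> (\<Union>Fm)" using nn1 nn2 by auto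
  have sub: "\<Union>Fp \<subseteq> A" "\<Union>Fm \<subseteq> A" using Fs(4) sub0 by blast+
  have "ennreal (\<Sum>B\<in>F. \<bar>\<nu> B\<bar>) = ennreal (\<nu> (\<Union>Fp)) + ennreal (- \<nu> (\<Union>Fm))"
    using eq nn ennreal_plus[OF nn] by simp
  also have "\<dots> \<le> pos_var A + neg_var A"
    unfolding pos_var_def neg_var_def
    by (intro add_mono SUP_upper) (use Up Um sub in blast)+
  finally show "ennreal (\<Sum>B\<in>F. \<bar>\<nu> B\<bar>) \<le> pos_var A + neg_var A" .
qed

lemma ennreal_charge_plus_le_tot_var:
  assumes C: "C \<in> R" "C \<subseteq> A" and D: "D \<in> R" "D \<subseteq> A"
  shows "ennreal (\<nu> C) + ennreal (- \<nu> D) \<le> tot_var A"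
proof -
  obtain C' where C': "C' \<in> R" "C' \<subseteq> C" "ennreal (\<nu> C) = ennreal (\<nu> C')" "0 \<le> \<nu> C'"
    using ennreal_charge_nonneg_witness C by blast
  obtain D' where D': "D' \<in> R" "D' \<subseteq> D" "ennreal (- \<nu> D) = ennreal (- \<nu> D')" "0 \<le> - \<nu> D'"
    using delta_ring_charge.ennreal_charge_nonneg_witness[OF delta_ring_charge_uminus, of D] D by auto
  have R1: "C' - D' \<in> R" "D' - C' \<in> R" "C' \<inter> D' \<in> R" using C' D' R_Diff R_Int R_sets by auto
  have e1: "\<nu> C' = \<nu> (C' - D') + \<nu> (C' \<inter> D')"
    using charge_add[OF R1(1) R1(3)] by (metis Diff_disjoint Int_Diff_disjoint Int_commute Un_Diff_Int)
  have e2: "\<nu> D' = \<nu> (D' - C') + \<nu> (C' \<inter> D')"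
    using charge_add[OF R1(2) R1(3)] by (metis Diff_disjoint Int_Diff_disjoint Int_commute Un_Diff_Int)
  define F where "F = {C' - D', D' - C'}"
  have FF: "F \<in> {F. finite F \<and> F \<subseteq> R \<and> disjoint F \<and> (\<forall>B\<in>F. B \<subseteq> A)}"
    unfolding F_def using R1 C D C' D' by (auto simp: pairwise_def disjnt_def)
  have "\<nu> C' - \<nu> D' \<le> (\<Sum>B\<in>F. \<bar>\<nu> B\<bar>)"
  proof (cases "C' - D' = D' - C'")
    case True
    then have "C' - D' = {}" "D' - C' = {}" by blast+
    then show ?thesis using e1 e2 F_def by (simp add: charge_empty)
  next
    case False
    then show ?thesis using e1 e2 F_def by simp
  qed
  then have "ennreal (\<nu> C) + ennreal (- \<nu> D) \<le> ennreal (\<Sum>B\<in>F. \<bar>\<nu> B\<bar>)"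
    using C' D' by (simp add: ennreal_plus[symmetric] ennreal_leI del: ennreal_plus)
  also have "\<dots> \<le> tot_var A" unfolding tot_var_def by (rule SUP_upper[OF FF])
  finally show ?thesis .
qed

lemma tot_var_ge: "pos_var A + neg_var A \<le> tot_var A"
proof -
  have ne: "{B \<in> R. B \<subseteq> A} \<noteq> {}" using R_empty by auto
  have "pos_var A + neg_var A = (SUP C\<in>{B \<in> R. B \<subseteq> A}. ennreal (\<nu> C) + neg_var A)"
    unfolding pos_var_def[of A] by (rule ennreal_SUP_add_left[symmetric, OF ne])
  also have "\<dots> \<le> tot_var A"
  proof (rule SUP_least)
    fix C assume C: "C \<in> {B \<in> R. B \<subseteq> A}"
    have "ennreal (\<nu> C) + neg_var A = (SUP D\<in>{B \<in> R. B \<subseteq> A}. ennreal (\<nu> C) + ennreal (- \<nu> D))"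
      unfolding neg_var_def by (rule ennreal_SUP_add_right[OF ne])
    also have "\<dots> \<le> tot_var A"
      by (rule SUP_least) (use C ennreal_charge_plus_le_tot_var in blast)
    finally show "ennreal (\<nu> C) + neg_var A \<le> tot_var A" .
  qed
  finally show ?thesis .
qed

lemma tot_var_eq: "tot_var A = pos_var A + neg_var A" using tot_var_le tot_var_ge by (rule antisym)

lemma neg_var_countably_additive: "countably_additive (sets M) neg_var"
  using delta_ring_charge.pos_var_countably_additive[OF delta_ring_charge_uminus] unfolding neg_var_eq_pos_var .

lemma tot_var_countably_additive: "countably_additive (sets M) tot_var"
  unfolding countably_additive_def tot_var_eq
proof (intro allI impI)
  fix A :: "nat \<Rightarrow> 'a set" assume A: "range A \<subseteq> sets M" "disjoint_family A" "(\<Union>i. A i) \<in> sets M"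
  have "(\<Sum>i. pos_var (A i) + neg_var (A i)) = (\<Sum>i. pos_var (A i)) + (\<Sum>i. neg_var (A i))"
    by (rule suminf_add[symmetric]) auto
  also have "\<dots> = pos_var (\<Union>i. A i) + neg_var (\<Union>i. A i)"
    using pos_var_countably_additive neg_var_countably_additive A unfolding countably_additive_def by simp
  finally show "(\<Sum>i. pos_var (A i) + neg_var (A i)) = pos_var (\<Union>i. A i) + neg_var (\<Union>i. A i)" .
qed

lemma emeasure_sm_var: "A \<in> sets M \<Longrightarrow> emeasure (sm_var M R \<nu>) A = pos_var A + neg_var A"
proof -
  assume A: "A \<in> sets M"
  have pos: "positive (sets M) tot_var" unfolding positive_def tot_var_eq
    using pos_var_empty delta_ring_charge.pos_var_empty[OF delta_ring_charge_uminus] neg_var_eq_pos_var by simp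
  have "emeasure (sm_var M R \<nu>) A = tot_var A"
    unfolding sm_var_def tot_var_def[symmetric]
    using emeasure_measure_of_sigma[OF sets.sigma_algebra_axioms pos tot_var_countably_additive] A by blast
  then show ?thesis by (simp add: tot_var_eq)
qed

lemma sets_sm_var[simp]: "sets (sm_var M R \<nu>) = sets M"
  unfolding sm_var_def using sets.sets_into_space by (subst sets_measure_of) (auto simp: sets.sigma_sets_eq)

end

section \<open>Vector measures with scalar charges\<close>

locale vector_charge =
  fixes M :: "'a measure" and R :: "'a set set" and m :: "'a set \<Rightarrow> 'b::real_normed_vector"
  assumes scalar_charge: "\<And>x'::'b \<Rightarrow>\<^sub>L real. delta_ring_charge M R (\<lambda>B. blinfun_apply x' (m B))"
begin

text \<open>The negative variation of \<open>x' \<circ> m\<close> is \<open>pos (- x')\<close>, see \<open>sm_neg_eq_pos_uminus\<close>; all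
  scalar integrals below are written with \<open>pos\<close> only.\<close>

abbreviation pos :: "('b \<Rightarrow>\<^sub>L real) \<Rightarrow> 'a measure" where
  "pos x' \<equiv> sm_pos M R (\<lambda>B. blinfun_apply x' (m B))"

lemma sets_pos [simp]: "sets (pos x') = sets M"
  by (rule delta_ring_charge.sets_sm_pos[OF scalar_charge])

lemma space_pos [simp]: "space (pos x') = space M"
  by (rule delta_ring_charge.space_sm_pos[OF scalar_charge])

lemma measurable_pos: "borel_measurable (pos x') = borel_measurable M"
  by (rule measurable_cong_sets) simp_all

lemma sets_var [simp]: "sets (sm_var M R (\<lambda>B. blinfun_apply x' (m B))) = sets M"
  by (rule delta_ring_charge.sets_sm_var[OF scalar_charge])

lemma measurable_var: "borel_measurable (sm_var M R (\<lambda>B. blinfun_apply x' (m B))) = borel_measurable M"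
  by (rule measurable_cong_sets) simp_all

lemma sm_neg_eq_pos_uminus: "sm_neg M R (\<lambda>B. blinfun_apply x' (m B)) = pos (- x')"
  unfolding delta_ring_charge.sm_neg_eq_sm_pos[OF scalar_charge] by (simp add: blinfun.minus_left)

lemma emeasure_pos: "A \<in> sets M \<Longrightarrow> emeasure (pos x') A = delta_ring_charge.pos_var R (\<lambda>B. blinfun_apply x' (m B)) A"
  by (rule delta_ring_charge.emeasure_sm_pos[OF scalar_charge])

lemma emeasure_var:
  "A \<in> sets M \<Longrightarrow> emeasure (sm_var M R (\<lambda>B. blinfun_apply x' (m B))) A = emeasure (pos x') A + emeasure (pos (- x')) A"
  using delta_ring_charge.emeasure_sm_var[OF scalar_charge, of A x'] emeasure_pos[of A x']
    emeasure_pos[of A "- x'"] delta_ring_charge.neg_var_eq_pos_var[OF scalar_charge, of x']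
  by (simp add: blinfun.minus_left)

lemma nn_integral_var:
  "f \<in> borel_measurable M \<Longrightarrow>
    (\<integral>\<^sup>+x. f x \<partial>sm_var M R (\<lambda>B. blinfun_apply x' (m B))) = (\<integral>\<^sup>+x. f x \<partial>pos x') + (\<integral>\<^sup>+x. f x \<partial>pos (- x'))"
  by (rule nn_integral_measure_add[OF sets_var sets_pos sets_pos emeasure_var])

lemma integrable_var_iff:
  fixes f :: "'a \<Rightarrow> real"
  assumes "f \<in> borel_measurable M"
  shows "integrable (sm_var M R (\<lambda>B. blinfun_apply x' (m B))) f \<longleftrightarrow> integrable (pos x') f \<and> integrable (pos (- x')) f"
proof -
  have "(\<lambda>x. ennreal (norm (f x))) \<in> borel_measurable M" using assms by measurable
  from nn_integral_var[OF this, of x'] show ?thesis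
    using assms by (simp add: integrable_iff_bounded measurable_var measurable_pos)
qed

lemma charge_eq_measure_diff:
  assumes "B \<in> R"
  shows "blinfun_apply x' (m B) = measure (pos x') B - measure (pos (- x')) B"
proof -
  interpret delta_ring_charge M R "\<lambda>B. blinfun_apply x' (m B)" by (rule scalar_charge)
  have "B \<in> sets M" using assms R_sets by blast
  then show ?thesis
    using jordan_decomposition[OF assms] neg_var_eq_pos_var emeasure_pos[of B x'] emeasure_pos[of B "- x'"]
    unfolding measure_def by (simp add: blinfun.minus_left)
qed

lemma sm_integral_eq:
  "sm_integral M R (\<lambda>B. blinfun_apply x' (m B)) A f =
    (\<integral>x. indicator A x * f x \<partial>pos x') - (\<integral>x. indicator A x * f x \<partial>pos (- x'))"
  unfolding sm_integral_def set_lebesgue_integral_def sm_neg_eq_pos_uminus by simp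

text \<open>The vector integral is unique because the dual of \<open>E\<close> separates points.\<close>
lemma I_vm_eqI:
  fixes f :: "'a \<Rightarrow> real"
  assumes "\<And>y. integrable (pos y) f"
    and "\<And>y. blinfun_apply y e = (\<integral>x. f x \<partial>pos y) - (\<integral>x. f x \<partial>pos (- y))"
  shows "I_vm M R m f = e"
  unfolding I_vm_def vm_integral_def
proof (rule the_equality)
  have eq: "sm_integral M R (\<lambda>B. blinfun_apply y (m B)) (space M) f = (\<integral>x. f x \<partial>pos y) - (\<integral>x. f x \<partial>pos (- y))" for y
    unfolding sm_integral_def sm_neg_eq_pos_uminus
    using set_integral_space[OF assms(1)] set_integral_space[OF assms(1)[of "- y"]] by simp
  show "\<forall>y. blinfun_apply y e = sm_integral M R (\<lambda>B. blinfun_apply y (m B)) (space M) f"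
    using assms(2) eq by simp
  then show "\<And>e'. \<forall>y. blinfun_apply y e' = sm_integral M R (\<lambda>B. blinfun_apply y (m B)) (space M) f \<Longrightarrow> e' = e"
    using blinfun_real_separates by metis
qed

lemma L1vmI:
  assumes f: "f \<in> borel_measurable M" and int: "\<And>y. integrable (pos y) f"
    and ex: "\<And>A. A \<in> sets M \<Longrightarrow> \<exists>e. \<forall>y. blinfun_apply y e =
      (\<integral>x. indicator A x * f x \<partial>pos y) - (\<integral>x. indicator A x * f x \<partial>pos (- y))"
  shows "f \<in> L1vm M R m"
  unfolding L1vm_def sm_integral_eq using f int ex integrable_var_iff by auto

lemma L1vmD:
  assumes "f \<in> L1vm M R m"
  shows L1vm_integrable_pos: "integrable (pos y) f"
    and blinfun_apply_I_vm: "blinfun_apply y (I_vm M R m f) = (\<integral>x. f x \<partial>pos y) - (\<integral>x. f x \<partial>pos (- y))"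
proof -
  have f: "f \<in> borel_measurable M" and "\<And>y. integrable (sm_var M R (\<lambda>B. blinfun_apply y (m B))) f"
    and ex: "\<And>A. A \<in> sets M \<Longrightarrow> \<exists>e. \<forall>y. blinfun_apply y e = sm_integral M R (\<lambda>B. blinfun_apply y (m B)) A f"
    using assms unfolding L1vm_def by auto
  then have int: "integrable (pos y) f" for y using integrable_var_iff by blast
  then show "integrable (pos y) f" .
  have eq: "sm_integral M R (\<lambda>B. blinfun_apply y (m B)) (space M) f =
      (\<integral>x. f x \<partial>pos y) - (\<integral>x. f x \<partial>pos (- y))" for y
    unfolding sm_integral_def sm_neg_eq_pos_uminus
    using set_integral_space[OF int] set_integral_space[OF int[of "- y"]] by simp
  obtain e where e: "\<forall>y. blinfun_apply y e = sm_integral M R (\<lambda>B. blinfun_apply y (m B)) (space M) f"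
    using ex[OF sets.top] by blast
  with int eq have "I_vm M R m f = e" by (intro I_vm_eqI) auto
  with e eq show "blinfun_apply y (I_vm M R m f) = (\<integral>x. f x \<partial>pos y) - (\<integral>x. f x \<partial>pos (- y))"
    by simp
qed

lemma norm_I_vm_diff_le:
  assumes f: "f \<in> L1vm M R m" and g: "g \<in> L1vm M R m"
  shows "ennreal (norm (I_vm M R m g - I_vm M R m f)) \<le> L1vm_norm M R m (\<lambda>x. g x - f x)"
proof -
  define w where "w = I_vm M R m g - I_vm M R m f"
  define h where "h x = g x - f x" for x
  obtain y :: "'b \<Rightarrow>\<^sub>L real" where y: "norm y \<le> 1" "blinfun_apply y w = norm w"
    using exists_norming_functional by blast
  have int: "integrable (pos z) h" for z
    unfolding h_def using L1vm_integrable_pos[OF f] L1vm_integrable_pos[OF g] by auto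
  have "norm w = (\<integral>x. h x \<partial>pos y) - (\<integral>x. h x \<partial>pos (- y))"
    using y(2) L1vm_integrable_pos[OF f] L1vm_integrable_pos[OF g]
    unfolding w_def h_def by (simp add: blinfun.diff_right blinfun_apply_I_vm[OF f] blinfun_apply_I_vm[OF g])
  also have "\<dots> \<le> (\<integral>x. \<bar>h x\<bar> \<partial>pos y) + (\<integral>x. \<bar>h x\<bar> \<partial>pos (- y))"
  proof -
    have "\<bar>\<integral>x. h x \<partial>pos z\<bar> \<le> (\<integral>x. \<bar>h x\<bar> \<partial>pos z)" for z
      using integral_norm_bound[of "pos z" h] by simp
    from this[of y] this[of "- y"] show ?thesis by linarith
  qed
  finally have "ennreal (norm w) \<le> (\<integral>\<^sup>+x. ennreal \<bar>h x\<bar> \<partial>pos y) + (\<integral>\<^sup>+x. ennreal \<bar>h x\<bar> \<partial>pos (- y))"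
    using int by (simp add: nn_integral_eq_integral ennreal_plus[symmetric] ennreal_leI del: ennreal_plus)
  also have "\<dots> = (\<integral>\<^sup>+x. ennreal \<bar>h x\<bar> \<partial>sm_var M R (\<lambda>B. blinfun_apply y (m B)))"
    using f g unfolding L1vm_def h_def by (intro nn_integral_var[symmetric]) auto
  also have "\<dots> \<le> L1vm_norm M R m h"
    unfolding L1vm_norm_def by (rule SUP_upper) (use y(1) in simp)
  finally show ?thesis unfolding w_def h_def .
qed

lemma I_vm_continuous:
  assumes "f \<in> L1vm M R m" "g \<in> L1vm M R m" "L1vm_norm M R m (\<lambda>x. g x - f x) < ennreal e"
  shows "dist (I_vm M R m g) (I_vm M R m f) < e"
  using order.strict_trans1[OF norm_I_vm_diff_le[OF assms(1,2)] assms(3)]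
  by (simp add: dist_norm ennreal_less_iff)

lemma vm_semivar_eq_0:
  assumes "A \<in> sets M" "\<And>y. emeasure (pos y) A = 0"
  shows "vm_semivar M R m A = 0"
proof -
  have "{x'::'b \<Rightarrow>\<^sub>L real. norm x' \<le> 1} \<noteq> {}" by (auto intro: exI[of _ 0])
  then show ?thesis unfolding vm_semivar_def emeasure_var[OF assms(1)] assms(2) by simp
qed

end

section \<open>Function spaces and operators\<close>

lemma ideal_fsD:
  assumes "ideal_fs M Y"
  shows ideal_fs_measurable: "f \<in> Y \<Longrightarrow> f \<in> borel_measurable M"
    and ideal_fs_zero: "(\<lambda>x. 0) \<in> Y"
    and ideal_fs_add: "f \<in> Y \<Longrightarrow> g \<in> Y \<Longrightarrow> (\<lambda>x. f x + g x) \<in> Y"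
    and ideal_fs_cmult: "f \<in> Y \<Longrightarrow> (\<lambda>x. c * f x) \<in> Y"
  using assms unfolding ideal_fs_def by blast+

lemma ideal_fs_dominated:
  assumes "ideal_fs M Y" "f \<in> Y" "g \<in> borel_measurable M" "\<And>x. x \<in> space M \<Longrightarrow> \<bar>g x\<bar> \<le> \<bar>f x\<bar>"
  shows "g \<in> Y"
  using assms unfolding ideal_fs_def by (metis (no_types, lifting) AE_I2)

lemma ideal_fs_diff:
  assumes "ideal_fs M Y" "f \<in> Y" "g \<in> Y"
  shows "(\<lambda>x. f x - g x) \<in> Y"
  using ideal_fs_add[OF assms(1,2) ideal_fs_cmult[OF assms(1,3), of "-1"]] by simp

lemma SigmaX_sets: "SigmaX M X \<subseteq> sets M"
  unfolding SigmaX_def by blast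

lemma indicator_SigmaX: "B \<in> SigmaX M X \<Longrightarrow> indicator B \<in> X"
  unfolding SigmaX_def by blast

lemma SigmaXI: "B \<in> sets M \<Longrightarrow> indicator B \<in> X \<Longrightarrow> B \<in> SigmaX M X"
  unfolding SigmaX_def by blast

lemma empty_SigmaX: "ideal_fs M X \<Longrightarrow> {} \<in> SigmaX M X"
  using ideal_fs_zero unfolding SigmaX_def by (simp add: indicator_def[abs_def])

lemma SigmaX_subset:
  assumes X: "ideal_fs M X" and B: "B \<in> SigmaX M X" and C: "C \<in> sets M" "C \<subseteq> B"
  shows "C \<in> SigmaX M X"
proof -
  have "indicator C \<in> X"
    by (rule ideal_fs_dominated[OF X indicator_SigmaX[OF B]]) (use C in \<open>auto simp: indicator_def\<close>)
  with C(1) show ?thesis by (rule SigmaXI)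
qed

lemma SigmaX_Un:
  assumes X: "ideal_fs M X" and B: "B \<in> SigmaX M X" and C: "C \<in> SigmaX M X"
  shows "B \<union> C \<in> SigmaX M X"
proof -
  have s: "B \<in> sets M" "C \<in> sets M" using B C SigmaX_sets[of M X] by auto
  have "indicator (B \<union> C) \<in> X"
    by (rule ideal_fs_dominated[OF X ideal_fs_add[OF X indicator_SigmaX[OF B] indicator_SigmaX[OF C]]])
      (use s in \<open>auto simp: indicator_def\<close>)
  then show ?thesis using s by (intro SigmaXI) auto
qed

lemma cont_lin_opD:
  assumes "cont_lin_op Z nZ S"
  shows cont_lin_op_add: "f \<in> Z \<Longrightarrow> g \<in> Z \<Longrightarrow> S (\<lambda>x. f x + g x) = S f + S g"
    and cont_lin_op_cmult: "f \<in> Z \<Longrightarrow> S (\<lambda>x. c * f x) = c *\<^sub>R S f"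
    and cont_lin_op_cont: "f \<in> Z \<Longrightarrow> e > 0 \<Longrightarrow> \<exists>d>0. \<forall>g\<in>Z. nZ (\<lambda>x. g x - f x) < d \<longrightarrow> dist (S g) (S f) < e"
  using assms unfolding cont_lin_op_def by blast+

lemma qbfsD:
  assumes "qbfs \<xi> Z nZ"
  shows qbfs_ideal: "ideal_fs \<xi> Z"
    and qbfs_nonneg: "f \<in> Z \<Longrightarrow> 0 \<le> nZ f"
    and qbfs_ae_zero: "f \<in> Z \<Longrightarrow> (AE x in \<xi>. f x = 0) \<Longrightarrow> nZ f = 0"
    and qbfs_cmult: "f \<in> Z \<Longrightarrow> nZ (\<lambda>x. c * f x) = \<bar>c\<bar> * nZ f"
  using assms unfolding qbfs_def by blast+

lemma qbfs_mono:
  assumes "qbfs \<xi> Z nZ" "f \<in> Z" "g \<in> Z" "\<And>x. x \<in> space \<xi> \<Longrightarrow> \<bar>f x\<bar> \<le> \<bar>g x\<bar>"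
  shows "nZ f \<le> nZ g"
  using assms unfolding qbfs_def by (metis (no_types, lifting) AE_I2)

lemma cont_lin_op_zero:
  assumes "qbfs \<xi> Z nZ" "cont_lin_op Z nZ S"
  shows "S (\<lambda>x. 0) = 0"
  using cont_lin_op_cmult[OF assms(2) ideal_fs_zero[OF qbfs_ideal[OF assms(1)]], of 0] by simp

text \<open>Continuity at \<open>0\<close> of a linear operator on a quasi-normed space gives a bound, by homogeneity
  of the quasi-norm.\<close>
lemma cont_lin_op_bounded:
  assumes Z: "qbfs \<xi> Z nZ" and S: "cont_lin_op Z nZ S"
  obtains C where "C > 0" "\<And>h. h \<in> Z \<Longrightarrow> norm (S h) \<le> C * nZ h"
proof -
  have Z0: "(\<lambda>x. 0) \<in> Z" by (rule ideal_fs_zero[OF qbfs_ideal[OF Z]])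
  obtain d where d: "d > 0" "\<And>g. g \<in> Z \<Longrightarrow> nZ (\<lambda>x. g x - 0) < d \<Longrightarrow> dist (S g) (S (\<lambda>x. 0)) < 1"
    using cont_lin_op_cont[OF S Z0, of 1] by auto
  have small: "norm (S g) < 1" if "g \<in> Z" "nZ g < d" for g
    using d(2)[OF that(1)] that cont_lin_op_zero[OF Z S] by simp
  have scaled: "norm (S h) < c" if h: "h \<in> Z" and c: "c > 0" "nZ h < d * c" for h c
  proof -
    have "nZ (\<lambda>x. (1/c) * h x) = nZ h / c" using qbfs_cmult[OF Z h, of "1/c"] c by simp
    also have "\<dots> < d" using c by (simp add: pos_divide_less_eq)
    finally have "norm (S (\<lambda>x. (1/c) * h x)) < 1"
      by (intro small ideal_fs_cmult[OF qbfs_ideal[OF Z] h])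
    moreover have "norm (S (\<lambda>x. (1/c) * h x)) = norm (S h) / c"
      using cont_lin_op_cmult[OF S h, of "1/c"] c by simp
    ultimately show ?thesis using c by (simp add: pos_divide_less_eq)
  qed
  have "norm (S h) \<le> (2/d) * nZ h" if h: "h \<in> Z" for h
  proof (cases "nZ h = 0")
    case True
    have "norm (S h) \<le> 0 + e" if "e > 0" for e using scaled[OF h that] True d(1) that by simp
    then have "norm (S h) \<le> 0" by (rule field_le_epsilon)
    then show ?thesis using True by simp
  next
    case False
    then have pos: "nZ h > 0" using qbfs_nonneg[OF Z h] by simp
    have "norm (S h) < 2 * nZ h / d" using pos d(1) by (intro scaled[OF h]) simp_all
    then show ?thesis by simp
  qed
  with d(1) show thesis by (intro that[of "2/d"]) auto
qed

lemma cont_lin_op_ae_zero: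
  assumes "qbfs \<xi> Z nZ" "cont_lin_op Z nZ S" "h \<in> Z" "AE x in \<xi>. h x = 0"
  shows "S h = 0"
proof -
  obtain C where "\<And>h. h \<in> Z \<Longrightarrow> norm (S h) \<le> C * nZ h"
    using cont_lin_op_bounded[OF assms(1,2)] by blast
  then show ?thesis using qbfs_ae_zero[OF assms(1,3,4)] assms(3) by force
qed

text \<open>\<open>\<sigma>\<close>-order continuity turns monotone pointwise convergence into norm convergence.\<close>
lemma cont_lin_op_incseq_tendsto:
  assumes Z: "qbfs \<xi> Z nZ" "sigma_order_cont \<xi> Z nZ" and S: "cont_lin_op Z nZ S"
    and u: "\<And>n. u n \<in> Z" and v: "v \<in> Z"
    and inc: "\<And>x. x \<in> space \<xi> \<Longrightarrow> incseq (\<lambda>n. u n x)"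
    and lim: "\<And>x. x \<in> space \<xi> \<Longrightarrow> (\<lambda>n. u n x) \<longlonglongrightarrow> v x"
  shows "(\<lambda>n. S (u n)) \<longlonglongrightarrow> S v"
proof -
  define w where "w n = (\<lambda>x. v x - u n x)" for n
  have wZ: "w n \<in> Z" for n unfolding w_def by (rule ideal_fs_diff[OF qbfs_ideal[OF Z(1)] v u])
  have "AE x in \<xi>. decseq (\<lambda>n. w n x) \<and> (\<lambda>n. w n x) \<longlonglongrightarrow> 0"
  proof (rule AE_I2)
    fix x assume x: "x \<in> space \<xi>"
    have "decseq (\<lambda>n. w n x)" using inc[OF x] unfolding w_def incseq_def decseq_def by simp
    moreover have "(\<lambda>n. w n x) \<longlonglongrightarrow> 0"
      using tendsto_diff[OF tendsto_const[of "v x"] lim[OF x]] unfolding w_def by simp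
    ultimately show "decseq (\<lambda>n. w n x) \<and> (\<lambda>n. w n x) \<longlonglongrightarrow> 0" ..
  qed
  then have nw: "(\<lambda>n. nZ (w n)) \<longlonglongrightarrow> 0" using Z(2) wZ unfolding sigma_order_cont_def by blast
  have nw_eq: "nZ (\<lambda>x. u n x - v x) = nZ (w n)" for n
    using qbfs_cmult[OF Z(1) wZ, of "-1"] unfolding w_def by simp
  show ?thesis
  proof (rule metric_LIMSEQ_I)
    fix e :: real assume "e > 0"
    obtain d where d: "d > 0" "\<And>g. g \<in> Z \<Longrightarrow> nZ (\<lambda>x. g x - v x) < d \<Longrightarrow> dist (S g) (S v) < e"
      using cont_lin_op_cont[OF S v \<open>e > 0\<close>] by blast
    obtain N where "\<And>n. n \<ge> N \<Longrightarrow> dist (nZ (w n)) 0 < d" using metric_LIMSEQ_D[OF nw d(1)] by blast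
    then have "dist (S (u n)) (S v) < e" if "n \<ge> N" for n
      using d(2)[OF u] nw_eq qbfs_nonneg[OF Z(1) wZ] that by fastforce
    then show "\<exists>N. \<forall>n\<ge>N. dist (S (u n)) (S v) < e" by blast
  qed
qed

section \<open>Extensions of \<open>T\<close> are integration operators\<close>

text \<open>The data of the optimality clause: an extension \<open>S\<close> of \<open>T\<close> to a \<open>\<sigma>\<close>-order continuous space
  \<open>Z(\<xi>)\<close>. The choice \<open>\<xi> = M\<close>, \<open>Z = X\<close>, \<open>S = T\<close> is the factorization itself.\<close>

locale qbfs_extension =
  fixes M :: "'a measure" and X :: "('a \<Rightarrow> real) set" and T :: "('a \<Rightarrow> real) \<Rightarrow> 'b::banach"
    and \<xi> :: "'a measure" and Z :: "('a \<Rightarrow> real) set" and nZ :: "('a \<Rightarrow> real) \<Rightarrow> real"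
    and S :: "('a \<Rightarrow> real) \<Rightarrow> 'b"
  assumes X: "ideal_fs M X" and sigma_X: "sigma_property M X"
    and sets_\<xi>: "sets \<xi> = sets M" and Z: "qbfs \<xi> Z nZ" and order_cont_Z: "sigma_order_cont \<xi> Z nZ"
    and X_subset_Z: "X \<subseteq> Z" and S: "cont_lin_op Z nZ S" and T_eq_S: "\<forall>f\<in>X. T f = S f"
begin

abbreviation "R \<equiv> SigmaX M X"

lemma space_\<xi>: "space \<xi> = space M"
  using sets_\<xi> by (rule sets_eq_imp_space_eq)

lemma Z_ideal: "ideal_fs \<xi> Z"
  by (rule qbfs_ideal[OF Z])

lemma Z_measurable: "f \<in> Z \<Longrightarrow> f \<in> borel_measurable M"
  using ideal_fs_measurable[OF Z_ideal] measurable_cong_sets[OF sets_\<xi> refl] by blast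

lemma Z_dominated: "f \<in> Z \<Longrightarrow> g \<in> borel_measurable M \<Longrightarrow> (\<And>x. x \<in> space M \<Longrightarrow> \<bar>g x\<bar> \<le> \<bar>f x\<bar>) \<Longrightarrow> g \<in> Z"
  using ideal_fs_dominated[OF Z_ideal] measurable_cong_sets[OF sets_\<xi> refl] space_\<xi> by blast

lemma indicator_Z: "B \<in> R \<Longrightarrow> indicator B \<in> Z"
  using X_subset_Z indicator_SigmaX[of B M X] by blast

lemma mT_eq_S: "B \<in> R \<Longrightarrow> mT T B = S (indicator B)"
  unfolding mT_def using T_eq_S indicator_SigmaX[of B M X] by blast

lemma mT_Un:
  assumes "B \<in> R" "C \<in> R" "B \<inter> C = {}"
  shows "mT T (B \<union> C) = mT T B + mT T C"
proof -
  have "indicator (B \<union> C) = (\<lambda>x. indicator B x + indicator C x :: real)"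
    using assms(3) by (auto simp: fun_eq_iff indicator_def)
  then show ?thesis
    using cont_lin_op_add[OF S indicator_Z indicator_Z] assms SigmaX_Un[OF X] by (simp add: mT_eq_S)
qed

lemma mT_sums:
  assumes A: "range A \<subseteq> R" "disjoint_family A" "(\<Union>i. A i) \<in> R"
  shows "(\<lambda>i. mT T (A i)) sums mT T (\<Union>i. A i)"
proof -
  define D where "D n = (\<Union>i<n. A i)" for n
  have D: "D n \<in> R \<and> mT T (D n) = (\<Sum>i<n. mT T (A i))" for n
  proof (induction n)
    case 0
    then show ?case using empty_SigmaX[OF X] cont_lin_op_zero[OF Z S] mT_eq_S
      by (simp add: D_def indicator_def[abs_def])
  next
    case (Suc n)
    have "D (Suc n) = D n \<union> A n" unfolding D_def by (auto simp: lessThan_Suc)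
    moreover have "D n \<inter> A n = {}"
      unfolding D_def using A(2) by (auto simp: disjoint_family_on_def dest: less_imp_neq)
    moreover have "A n \<in> R" using A(1) by blast
    ultimately show ?case using Suc mT_Un SigmaX_Un[OF X] by simp
  qed
  have inc: "incseq D" unfolding D_def incseq_def by (auto simp: subset_eq)
  have "(\<lambda>n. S (indicator (D n))) \<longlonglongrightarrow> S (indicator (\<Union>i. A i))"
  proof (rule cont_lin_op_incseq_tendsto[OF Z order_cont_Z S])
    show "indicator (D n) \<in> Z" for n using D indicator_Z by blast
    show "indicator (\<Union>i. A i) \<in> Z" using A(3) indicator_Z by blast
    show "incseq (\<lambda>n. indicator (D n) x :: real)" for x
      using inc by (auto simp: incseq_def indicator_def subset_eq)
    have "(\<Union>n. D n) = (\<Union>i. A i)" unfolding D_def by blast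
    then show "(\<lambda>n. indicator (D n) x :: real) \<longlonglongrightarrow> indicator (\<Union>i. A i) x" for x
      using LIMSEQ_indicator_incseq[OF inc, of x] by simp
  qed
  moreover have "S (indicator (D n)) = (\<Sum>i<n. mT T (A i))" for n using D[of n] mT_eq_S[of "D n"] by simp
  ultimately show ?thesis unfolding sums_def using mT_eq_S[OF A(3)] by simp
qed

lemma mT_bounded:
  assumes "B \<in> R"
  shows "\<exists>K. \<forall>C\<in>R. C \<subseteq> B \<longrightarrow> norm (mT T C) \<le> K"
proof -
  obtain c where c: "c > 0" "\<And>h. h \<in> Z \<Longrightarrow> norm (S h) \<le> c * nZ h"
    using cont_lin_op_bounded[OF Z S] by blast
  have "norm (mT T C) \<le> c * nZ (indicator B)" if "C \<in> R" "C \<subseteq> B" for C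
  proof -
    have "nZ (indicator C) \<le> nZ (indicator B)"
      using that assms by (intro qbfs_mono[OF Z] indicator_Z) (auto simp: indicator_def)
    then show ?thesis using c that mT_eq_S[OF that(1)] indicator_Z[OF that(1)]
      by (metis mult_left_mono order_trans less_imp_le)
  qed
  then show ?thesis by blast
qed

lemma delta_ring_charge_mT: "delta_ring_charge M R (\<lambda>B. blinfun_apply x' (mT T B))"
proof
  show "R \<subseteq> sets M" by (rule SigmaX_sets)
  show "{} \<in> R" by (rule empty_SigmaX[OF X])
  show "\<And>B C. B \<in> R \<Longrightarrow> C \<in> sets M \<Longrightarrow> C \<subseteq> B \<Longrightarrow> C \<in> R" by (rule SigmaX_subset[OF X])
  show "\<And>B C. B \<in> R \<Longrightarrow> C \<in> R \<Longrightarrow> B \<union> C \<in> R" by (rule SigmaX_Un[OF X])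
  show "\<And>B C. B \<in> R \<Longrightarrow> C \<in> R \<Longrightarrow> B \<inter> C = {} \<Longrightarrow>
    blinfun_apply x' (mT T (B \<union> C)) = blinfun_apply x' (mT T B) + blinfun_apply x' (mT T C)"
    by (simp add: mT_Un blinfun.add_right)
  show "\<And>A. range A \<subseteq> R \<Longrightarrow> disjoint_family A \<Longrightarrow> (\<Union>i. A i) \<in> R \<Longrightarrow>
    (\<lambda>i. blinfun_apply x' (mT T (A i))) sums blinfun_apply x' (mT T (\<Union>i. A i))"
    by (rule bounded_linear.sums[OF blinfun.bounded_linear_right mT_sums])
  show "\<exists>K. \<forall>C\<in>R. C \<subseteq> B \<longrightarrow> \<bar>blinfun_apply x' (mT T C)\<bar> \<le> K" if B: "B \<in> R" for B
  proof -
    obtain K where K: "\<forall>C\<in>R. C \<subseteq> B \<longrightarrow> norm (mT T C) \<le> K" using mT_bounded[OF B] by blast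
    have "\<bar>blinfun_apply x' (mT T C)\<bar> \<le> norm x' * K" if "C \<in> R" "C \<subseteq> B" for C
      using norm_blinfun[of x' "mT T C"] K that by (simp add: order_trans mult_left_mono)
    then show ?thesis by blast
  qed
qed

lemma vector_charge_mT: "vector_charge M R (mT T)"
  by (rule vector_charge.intro) (rule delta_ring_charge_mT)

end

sublocale qbfs_extension \<subseteq> vector_charge M "SigmaX M X" "mT T"
  by (rule vector_charge_mT)

context qbfs_extension
begin

definition X_below :: "('a \<Rightarrow> real) \<Rightarrow> ('a \<Rightarrow> real) set" where
  "X_below u = {h \<in> X. \<forall>x\<in>space M. 0 \<le> h x \<and> h x \<le> u x}"

definition dominated_sup :: "('b \<Rightarrow>\<^sub>L real) \<Rightarrow> ('a \<Rightarrow> real) \<Rightarrow> ennreal" where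
  "dominated_sup x' u = (SUP h\<in>X_below u. ennreal (blinfun_apply x' (S h)))"

lemma zero_X_below: "(\<And>x. 0 \<le> u x) \<Longrightarrow> (\<lambda>x. 0) \<in> X_below u"
  unfolding X_below_def using ideal_fs_zero[OF X] by auto

lemma dominated_sup_mono:
  "(\<And>x. x \<in> space M \<Longrightarrow> u x \<le> v x) \<Longrightarrow> dominated_sup x' u \<le> dominated_sup x' v"
  unfolding dominated_sup_def X_below_def by (rule SUP_subset_mono) (auto intro: order_trans)

text \<open>Replacing \<open>h\<close> by \<open>0\<close> when \<open>x'(S h) < 0\<close> shows that the sum of two values below the
  supremum is attained by an element of \<open>X_below (v + u)\<close>.\<close>
lemma ennreal_S_add_le_dominated_sup:
  assumes h1: "h1 \<in> X_below v" and h2: "h2 \<in> X_below u"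
  shows "ennreal (blinfun_apply x' (S h1)) + ennreal (blinfun_apply x' (S h2)) \<le> dominated_sup x' (\<lambda>x. v x + u x)"
proof -
  define h1' where "h1' = (if 0 \<le> blinfun_apply x' (S h1) then h1 else (\<lambda>x. 0))"
  define h2' where "h2' = (if 0 \<le> blinfun_apply x' (S h2) then h2 else (\<lambda>x. 0))"
  have S0: "S (\<lambda>x. 0) = 0" by (rule cont_lin_op_zero[OF Z S])
  have "(\<lambda>x. 0) \<in> X_below v" "(\<lambda>x. 0) \<in> X_below u"
    using h1 h2 ideal_fs_zero[OF X] unfolding X_below_def by (auto intro: order_trans)
  then have H: "h1' \<in> X_below v" "h2' \<in> X_below u" using h1 h2 unfolding h1'_def h2'_def by simp_all
  then have X': "h1' \<in> X" "h2' \<in> X" unfolding X_below_def by auto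
  have e: "ennreal (blinfun_apply x' (S h1)) = ennreal (blinfun_apply x' (S h1'))" "0 \<le> blinfun_apply x' (S h1')"
    "ennreal (blinfun_apply x' (S h2)) = ennreal (blinfun_apply x' (S h2'))" "0 \<le> blinfun_apply x' (S h2')"
    unfolding h1'_def h2'_def using S0 by (simp_all add: ennreal_neg)
  have sum: "(\<lambda>x. h1' x + h2' x) \<in> X_below (\<lambda>x. v x + u x)"
    using H ideal_fs_add[OF X X'] unfolding X_below_def by (auto intro: add_mono)
  have "ennreal (blinfun_apply x' (S h1)) + ennreal (blinfun_apply x' (S h2)) =
      ennreal (blinfun_apply x' (S (\<lambda>x. h1' x + h2' x)))"
    using e cont_lin_op_add[OF S X'[THEN subsetD[OF X_subset_Z]]]
    by (simp add: blinfun.add_right ennreal_plus[symmetric] del: ennreal_plus)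
  also have "\<dots> \<le> dominated_sup x' (\<lambda>x. v x + u x)"
    unfolding dominated_sup_def by (rule SUP_upper[OF sum])
  finally show ?thesis .
qed

lemma dominated_sup_superadditive:
  assumes "\<And>x. 0 \<le> u x" "\<And>x. 0 \<le> v x"
  shows "dominated_sup x' v + dominated_sup x' u \<le> dominated_sup x' (\<lambda>x. v x + u x)"
proof -
  have ne: "X_below v \<noteq> {}" "X_below u \<noteq> {}" using zero_X_below assms by blast+
  have "dominated_sup x' v + dominated_sup x' u =
      (SUP h1\<in>X_below v. ennreal (blinfun_apply x' (S h1)) + dominated_sup x' u)"
    unfolding dominated_sup_def[of x' v] by (rule ennreal_SUP_add_left[symmetric, OF ne(1)])
  also have "\<dots> \<le> dominated_sup x' (\<lambda>x. v x + u x)"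
  proof (rule SUP_least)
    fix h1 assume "h1 \<in> X_below v"
    then show "ennreal (blinfun_apply x' (S h1)) + dominated_sup x' u \<le> dominated_sup x' (\<lambda>x. v x + u x)"
      unfolding dominated_sup_def[of x' u] ennreal_SUP_add_right[OF ne(2)]
      by (intro SUP_least ennreal_S_add_le_dominated_sup)
  qed
  finally show ?thesis .
qed

lemma dominated_sup_cmult:
  assumes "0 \<le> c"
  shows "ennreal c * dominated_sup x' u \<le> dominated_sup x' (\<lambda>x. c * u x)"
proof -
  have "ennreal c * ennreal (blinfun_apply x' (S h)) \<le> dominated_sup x' (\<lambda>x. c * u x)"
    if h: "h \<in> X_below u" for h
  proof -
    from h have hX: "h \<in> X" unfolding X_below_def by auto
    have "(\<lambda>x. c * h x) \<in> X_below (\<lambda>x. c * u x)"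
      using h ideal_fs_cmult[OF X hX] assms unfolding X_below_def by (auto intro: mult_left_mono)
    then have "ennreal (blinfun_apply x' (S (\<lambda>x. c * h x))) \<le> dominated_sup x' (\<lambda>x. c * u x)"
      unfolding dominated_sup_def by (rule SUP_upper)
    moreover have "ennreal c * ennreal (blinfun_apply x' (S h)) = ennreal (blinfun_apply x' (S (\<lambda>x. c * h x)))"
      using cont_lin_op_cmult[OF S subsetD[OF X_subset_Z hX]] assms
      by (simp add: blinfun.scaleR_right ennreal_mult')
    ultimately show ?thesis by simp
  qed
  then show ?thesis
    unfolding dominated_sup_def[of x' u] SUP_mult_left_ennreal by (rule SUP_least)
qed

lemma emeasure_pos_le_dominated_sup:
  assumes "A \<in> sets M"
  shows "emeasure (pos x') A \<le> dominated_sup x' (indicator A)"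
  unfolding emeasure_pos[OF assms] delta_ring_charge.pos_var_def[OF delta_ring_charge_mT] dominated_sup_def
proof (rule SUP_mono)
  fix B assume B: "B \<in> {B \<in> R. B \<subseteq> A}"
  then have "indicator B \<in> X_below (indicator A)"
    unfolding X_below_def using indicator_SigmaX[of B M X] by (auto simp: indicator_def)
  moreover have "blinfun_apply x' (mT T B) = blinfun_apply x' (S (indicator B))" using B mT_eq_S by simp
  ultimately show "\<exists>h\<in>X_below (indicator A). ennreal (blinfun_apply x' (mT T B)) \<le> ennreal (blinfun_apply x' (S h))" by auto
qed

lemma nn_integral_pos_le_dominated_sup:
  assumes "u \<in> borel_measurable M" "\<And>x. 0 \<le> u x"
  shows "(\<integral>\<^sup>+x. ennreal (u x) \<partial>pos x') \<le> dominated_sup x' u"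
  using assms
proof (induction u rule: borel_measurable_induct_real)
  case (set A)
  then show ?case using emeasure_pos_le_dominated_sup by (simp add: ennreal_indicator)
next
  case (mult u c)
  have "(\<integral>\<^sup>+x. ennreal (c * u x) \<partial>pos x') = ennreal c * (\<integral>\<^sup>+x. ennreal (u x) \<partial>pos x')"
    using mult by (simp add: ennreal_mult' nn_integral_cmult measurable_pos)
  also have "\<dots> \<le> ennreal c * dominated_sup x' u" using mult by (intro mult_left_mono) auto
  also have "\<dots> \<le> dominated_sup x' (\<lambda>x. c * u x)" by (rule dominated_sup_cmult[OF mult(1)])
  finally show ?case .
next
  case (add u v)
  have "(\<integral>\<^sup>+x. ennreal (v x + u x) \<partial>pos x') = (\<integral>\<^sup>+x. ennreal (v x) \<partial>pos x') + (\<integral>\<^sup>+x. ennreal (u x) \<partial>pos x')"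
    using add by (simp add: nn_integral_add measurable_pos)
  also have "\<dots> \<le> dominated_sup x' v + dominated_sup x' u" using add by (intro add_mono) auto
  also have "\<dots> \<le> dominated_sup x' (\<lambda>x. v x + u x)" by (rule dominated_sup_superadditive) (use add in auto)
  finally show ?case .
next
  case (seq U)
  have inc: "incseq (\<lambda>i. U i x)" for x using \<open>incseq U\<close> by (auto simp: incseq_def le_fun_def)
  have incE: "incseq (\<lambda>i x. ennreal (U i x))"
    using \<open>incseq U\<close> by (auto simp: incseq_def le_fun_def intro!: ennreal_leI)
  have "ennreal (u x) = (SUP i. ennreal (U i x))" if "x \<in> space M" for x
  proof (rule LIMSEQ_unique[OF tendsto_ennrealI[OF seq.hyps(4)[OF that]] LIMSEQ_SUP])
    show "incseq (\<lambda>i. ennreal (U i x))" using inc[of x] by (auto simp: incseq_def intro: ennreal_leI)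
  qed
  then have "(\<integral>\<^sup>+x. ennreal (u x) \<partial>pos x') = (\<integral>\<^sup>+x. (SUP i. ennreal (U i x)) \<partial>pos x')"
    by (intro nn_integral_cong) simp
  also have "\<dots> = (SUP i. \<integral>\<^sup>+x. ennreal (U i x) \<partial>pos x')"
    by (rule nn_integral_monotone_convergence_SUP[OF incE]) (unfold measurable_pos, use seq.hyps(1) in measurable)
  also have "\<dots> \<le> (SUP i. dominated_sup x' (U i))" by (rule SUP_mono') (rule seq.IH)
  also have "\<dots> \<le> dominated_sup x' u"
    by (intro SUP_least dominated_sup_mono incseq_le[OF inc seq.hyps(4)])
  finally show ?case .
qed

lemma dominated_sup_finite:
  assumes u: "u \<in> Z" "\<And>x. 0 \<le> u x"
  shows "dominated_sup x' u < \<infinity>"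
proof -
  obtain c where c: "c > 0" "\<And>h. h \<in> Z \<Longrightarrow> norm (S h) \<le> c * nZ h"
    using cont_lin_op_bounded[OF Z S] by blast
  have "ennreal (blinfun_apply x' (S h)) \<le> ennreal (norm x' * (c * nZ u))" if h: "h \<in> X_below u" for h
  proof (rule ennreal_leI)
    have hZ: "h \<in> Z" using h X_subset_Z unfolding X_below_def by auto
    have "blinfun_apply x' (S h) \<le> norm x' * norm (S h)" using norm_blinfun[of x' "S h"] by simp
    also have "\<dots> \<le> norm x' * (c * nZ h)" by (intro mult_left_mono c(2) hZ) simp
    also have "\<dots> \<le> norm x' * (c * nZ u)"
      using h u c(1) space_\<xi> unfolding X_below_def
      by (intro mult_left_mono qbfs_mono[OF Z hZ u(1)]) auto
    finally show "blinfun_apply x' (S h) \<le> norm x' * (c * nZ u)" .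
  qed
  then have "dominated_sup x' u \<le> ennreal (norm x' * (c * nZ u))"
    unfolding dominated_sup_def by (rule SUP_least)
  then show ?thesis using order.strict_trans1 by fastforce
qed

lemma integrable_pos_nonneg:
  assumes "u \<in> Z" "\<And>x. 0 \<le> u x"
  shows "integrable (pos x') u"
proof -
  have "(\<integral>\<^sup>+x. ennreal (u x) \<partial>pos x') < \<infinity>"
    using nn_integral_pos_le_dominated_sup[OF Z_measurable[OF assms(1)] assms(2)]
      dominated_sup_finite[OF assms] by (rule order.strict_trans1)
  then show ?thesis using assms Z_measurable by (simp add: integrable_iff_bounded measurable_pos)
qed

definition S_represented :: "('b \<Rightarrow>\<^sub>L real) \<Rightarrow> ('a \<Rightarrow> real) \<Rightarrow> bool" where
  "S_represented x' u \<longleftrightarrow> blinfun_apply x' (S u) = (\<integral>x. u x \<partial>pos x') - (\<integral>x. u x \<partial>pos (- x'))"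

lemma S_represented_incseq_limit:
  assumes u: "\<And>n. u n \<in> Z" "\<And>n x. 0 \<le> u n x" and v: "v \<in> Z" "\<And>x. 0 \<le> v x"
    and inc: "\<And>x. x \<in> space M \<Longrightarrow> incseq (\<lambda>n. u n x)"
    and lim: "\<And>x. x \<in> space M \<Longrightarrow> (\<lambda>n. u n x) \<longlonglongrightarrow> v x"
    and rep: "\<And>n. S_represented x' (u n)"
  shows "S_represented x' v"
proof -
  have "(\<lambda>n. S (u n)) \<longlonglongrightarrow> S v"
    using cont_lin_op_incseq_tendsto[OF Z order_cont_Z S u(1) v(1)] inc lim space_\<xi> by simp
  then have l1: "(\<lambda>n. blinfun_apply x' (S (u n))) \<longlonglongrightarrow> blinfun_apply x' (S v)"
    by (rule blinfun.tendsto[OF tendsto_const])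
  have dc: "(\<lambda>n. \<integral>x. u n x \<partial>pos y) \<longlonglongrightarrow> (\<integral>x. v x \<partial>pos y)" for y
  proof (rule integral_dominated_convergence[where w=v])
    show "v \<in> borel_measurable (pos y)" "u n \<in> borel_measurable (pos y)" for n
      using Z_measurable u(1) v(1) by (simp_all add: measurable_pos)
    show "integrable (pos y) v" by (rule integrable_pos_nonneg[OF v])
    show "AE x in pos y. (\<lambda>n. u n x) \<longlonglongrightarrow> v x" using lim by (intro AE_I2) simp
    show "AE x in pos y. norm (u n x) \<le> v x" for n
      using incseq_le[OF inc lim] u(2)[of n] by (intro AE_I2) simp
  qed
  have "(\<lambda>n. blinfun_apply x' (S (u n))) \<longlonglongrightarrow> (\<integral>x. v x \<partial>pos x') - (\<integral>x. v x \<partial>pos (- x'))"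
    using tendsto_diff[OF dc dc] rep unfolding S_represented_def by simp
  with l1 show ?thesis unfolding S_represented_def by (rule LIMSEQ_unique)
qed

lemma S_represented_SigmaX:
  assumes "B \<in> R"
  shows "S_represented x' (indicator B)"
proof -
  have "B \<inter> space M = B" using assms SigmaX_sets[of M X] sets.sets_into_space by blast
  then show ?thesis
    unfolding S_represented_def using charge_eq_measure_diff[OF assms, of x'] mT_eq_S[OF assms]
    by simp
qed

lemma exhausting_SigmaX:
  obtains V :: "nat \<Rightarrow> 'a set" where "\<And>n. V n \<in> R" "incseq V" "(\<Union>n. V n) = space M"
proof -
  from sigma_X obtain \<Omega> :: "nat \<Rightarrow> 'a set" where \<Omega>: "\<forall>n. \<Omega> n \<in> sets M \<and> indicator (\<Omega> n) \<in> X" "(\<Union>n. \<Omega> n) = space M"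
    unfolding sigma_property_def by blast
  then have \<Omega>R: "\<Omega> n \<in> R" for n using SigmaXI[of "\<Omega> n" M X] by blast
  define V where "V n = (\<Union>k\<le>n. \<Omega> k)" for n
  have "V n \<in> R" for n
  proof (induction n)
    case 0 then show ?case using \<Omega>R by (simp add: V_def)
  next
    case (Suc n)
    have "V (Suc n) = V n \<union> \<Omega> (Suc n)" unfolding V_def by (auto simp: atMost_Suc)
    then show ?case using Suc \<Omega>R SigmaX_Un[OF X] by simp
  qed
  moreover have "incseq V" unfolding incseq_def V_def by (intro allI impI UN_mono) auto
  moreover have "(\<Union>n. V n) = space M" using \<Omega>(2) unfolding V_def by blast
  ultimately show thesis by (rule that)
qed

lemma S_represented_indicator:
  assumes A: "A \<in> sets M" "indicator A \<in> Z"
  shows "S_represented x' (indicator A)"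
proof -
  obtain V :: "nat \<Rightarrow> 'a set" where V: "\<And>n. V n \<in> R" "incseq V" "(\<Union>n. V n) = space M"
    using exhausting_SigmaX by metis
  have AV: "A \<inter> V n \<in> R" for n by (rule SigmaX_subset[OF X V(1)]) (use A V(1) SigmaX_sets[of M X] in auto)
  have inc: "incseq (\<lambda>n. A \<inter> V n)" using V(2) by (auto simp: incseq_def)
  show ?thesis
  proof (rule S_represented_incseq_limit[where u="\<lambda>n. indicator (A \<inter> V n)"])
    show "incseq (\<lambda>n. indicator (A \<inter> V n) x :: real)" for x
      using inc by (auto simp: incseq_def indicator_def subset_eq)
    have "(\<Union>n. A \<inter> V n) = A \<inter> space M" using V(3) by blast
    then show "(\<lambda>n. indicator (A \<inter> V n) x :: real) \<longlonglongrightarrow> indicator A x" if "x \<in> space M" for x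
      using LIMSEQ_indicator_incseq[OF inc, of x] that by (simp add: indicator_def)
  qed (use A AV indicator_Z S_represented_SigmaX in auto)
qed

lemma S_represented_cmult:
  assumes "u \<in> Z" "S_represented x' u"
  shows "S_represented x' (\<lambda>x. c * u x)"
  using assms cont_lin_op_cmult[OF S assms(1), of c]
  unfolding S_represented_def by (simp add: blinfun.scaleR_right right_diff_distrib)

lemma S_represented_add:
  assumes "u \<in> Z" "\<And>x. 0 \<le> u x" "S_represented x' u" "v \<in> Z" "\<And>x. 0 \<le> v x" "S_represented x' v"
  shows "S_represented x' (\<lambda>x. v x + u x)"
  using assms cont_lin_op_add[OF S assms(4,1)] integrable_pos_nonneg[OF assms(1,2)]
    integrable_pos_nonneg[OF assms(4,5)]
  unfolding S_represented_def by (simp add: blinfun.add_right)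

lemma S_represented_nonneg:
  assumes "u \<in> Z" "\<And>x. 0 \<le> u x"
  shows "S_represented x' u"
proof -
  have "u \<in> Z \<longrightarrow> S_represented x' u"
    using Z_measurable[OF assms(1)] assms(2)
  proof (induction u rule: borel_measurable_induct_real)
    case (set A)
    then show ?case using S_represented_indicator by blast
  next
    case (mult u c)
    show ?case
    proof
      assume cu: "(\<lambda>x. c * u x) \<in> Z"
      show "S_represented x' (\<lambda>x. c * u x)"
      proof (cases "c = 0")
        case True
        then show ?thesis unfolding S_represented_def using cont_lin_op_zero[OF Z S] by simp
      next
        case False
        have "(\<lambda>x. (1/c) * (c * u x)) \<in> Z" by (rule ideal_fs_cmult[OF Z_ideal cu])
        then have uZ: "u \<in> Z" using False by simp
        show ?thesis by (rule S_represented_cmult[OF uZ]) (use mult uZ in blast)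
      qed
    qed
  next
    case (add u v)
    show ?case
    proof
      assume vu: "(\<lambda>x. v x + u x) \<in> Z"
      have uZ: "u \<in> Z" by (rule Z_dominated[OF vu]) (use add in auto)
      have vZ: "v \<in> Z" by (rule Z_dominated[OF vu]) (use add in auto)
      show "S_represented x' (\<lambda>x. v x + u x)"
        by (rule S_represented_add[OF uZ _ _ vZ]) (use add uZ vZ in auto)
    qed
  next
    case (seq U)
    show ?case
    proof
      assume uZ: "u \<in> Z"
      have inc: "incseq (\<lambda>i. U i x)" for x using \<open>incseq U\<close> by (auto simp: incseq_def le_fun_def)
      have UZ: "U i \<in> Z" for i
        by (rule Z_dominated[OF uZ seq.hyps(1)])
          (use incseq_le[OF inc seq.hyps(4)] seq.hyps(2)[of i] in \<open>force intro: order_trans[OF _ abs_ge_self]\<close>)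
      show "S_represented x' u"
        by (rule S_represented_incseq_limit[where u=U, OF UZ _ uZ]) (use inc seq UZ assms(2) in auto)
    qed
  qed
  with assms show ?thesis by blast
qed

lemma S_represented_Z:
  assumes u: "u \<in> Z"
  shows "integrable (pos x') u" "S_represented x' u"
proof -
  define up where "up x = max (u x) 0" for x
  define um where "um x = max (- u x) 0" for x
  have m: "up \<in> borel_measurable M" "um \<in> borel_measurable M"
    unfolding up_def um_def using Z_measurable[OF u] by measurable
  have upZ: "up \<in> Z" by (rule Z_dominated[OF u m(1)]) (auto simp: up_def)
  have umZ: "um \<in> Z" by (rule Z_dominated[OF u m(2)]) (auto simp: um_def)
  have nn: "\<And>x. 0 \<le> up x" "\<And>x. 0 \<le> um x" unfolding up_def um_def by auto
  have u_eq: "u = (\<lambda>x. up x - um x)" unfolding up_def um_def by (auto simp: fun_eq_iff max_def)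
  have int: "integrable (pos y) up" "integrable (pos y) um" for y
    using integrable_pos_nonneg[OF upZ nn(1)] integrable_pos_nonneg[OF umZ nn(2)] by auto
  show "integrable (pos x') u" unfolding u_eq using int by (rule Bochner_Integration.integrable_diff)
  have "S u = S up - S um"
    using cont_lin_op_add[OF S upZ ideal_fs_cmult[OF Z_ideal umZ, of "-1"]]
      cont_lin_op_cmult[OF S umZ, of "-1"] u_eq by simp
  then show "S_represented x' u"
    using S_represented_nonneg[OF upZ nn(1)] S_represented_nonneg[OF umZ nn(2)] int
    unfolding S_represented_def u_eq by (simp add: blinfun.diff_right)
qed

lemma Z_subset_L1vm: "Z \<subseteq> L1vm M R (mT T)"
proof
  fix u assume u: "u \<in> Z"
  show "u \<in> L1vm M R (mT T)"
  proof (rule L1vmI)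
    show "u \<in> borel_measurable M" by (rule Z_measurable[OF u])
    show "integrable (pos y) u" for y by (rule S_represented_Z(1)[OF u])
    fix A assume A: "A \<in> sets M"
    have "(\<lambda>x. indicator A x * u x) \<in> Z"
      by (rule Z_dominated[OF u]) (use Z_measurable[OF u] A in \<open>auto simp: indicator_def\<close>)
    from S_represented_Z(2)[OF this]
    show "\<exists>e. \<forall>y. blinfun_apply y e =
        (\<integral>x. indicator A x * u x \<partial>pos y) - (\<integral>x. indicator A x * u x \<partial>pos (- y))"
      unfolding S_represented_def by blast
  qed
qed

lemma I_vm_eq_S: "u \<in> Z \<Longrightarrow> I_vm M R (mT T) u = S u"
  using S_represented_Z unfolding S_represented_def by (intro I_vm_eqI) auto

text \<open>\<open>S\<close> kills functions vanishing \<open>\<xi>\<close>-a.e., so no set of \<open>\<Sigma>\<^sub>X\<close> inside a \<open>\<xi>\<close>-null set carries mass.\<close>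
lemma vm_semivar_null:
  assumes A: "A \<in> sets \<xi>" "emeasure \<xi> A = 0"
  shows "vm_semivar M R (mT T) A = 0"
proof (rule vm_semivar_eq_0)
  show As: "A \<in> sets M" using A sets_\<xi> by simp
  fix y :: "'b \<Rightarrow>\<^sub>L real"
  have "ennreal (blinfun_apply y (mT T B)) \<le> 0" if B: "B \<in> R" "B \<subseteq> A" for B
  proof -
    have "AE x in \<xi>. indicator B x = (0::real)"
      by (rule AE_I'[of A]) (use A B in \<open>auto simp: null_sets_def indicator_def\<close>)
    then show ?thesis using cont_lin_op_ae_zero[OF Z S indicator_Z] B mT_eq_S by simp
  qed
  then show "emeasure (pos y) A = 0"
    unfolding emeasure_pos[OF As] delta_ring_charge.pos_var_def[OF delta_ring_charge_mT]
    by (intro antisym SUP_least) auto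
qed

lemma incl_into_L1_Z: "incl_into_L1 \<xi> Z M R (mT T)"
  unfolding incl_into_L1_def using vm_semivar_null Z_subset_L1vm by blast

end

theorem theorem5p1:
  fixes M :: "'a measure" and X :: "('a \<Rightarrow> real) set" and nX :: "('a \<Rightarrow> real) \<Rightarrow> real"
    and T :: "('a \<Rightarrow> real) \<Rightarrow> 'b::banach"
  assumes "qbfs M X nX" and "sigma_order_cont M X nX" and "sigma_property M X"
    and "cont_lin_op X nX T"
  shows "incl_into_L1 M X M (SigmaX M X) (mT T)
    \<and> (\<forall>f\<in>X. T f = I_vm M (SigmaX M X) (mT T) f)
    \<and> (\<forall>f\<in>L1vm M (SigmaX M X) (mT T). \<forall>e>0. \<exists>d>0. \<forall>g\<in>L1vm M (SigmaX M X) (mT T).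
          L1vm_norm M (SigmaX M X) (mT T) (\<lambda>x. g x - f x) < ennreal d \<longrightarrow>
          dist (I_vm M (SigmaX M X) (mT T) g) (I_vm M (SigmaX M X) (mT T) f) < e)
    \<and> (\<forall>(\<xi>::'a measure) (Z::('a \<Rightarrow> real) set) nZ (S::('a \<Rightarrow> real) \<Rightarrow> 'b).
          sets \<xi> = sets M \<and> absolutely_continuous M \<xi> \<and> qbfs \<xi> Z nZ \<and> sigma_order_cont \<xi> Z nZ
          \<and> X \<subseteq> Z \<and> cont_lin_op Z nZ S \<and> (\<forall>f\<in>X. T f = S f)
          \<longrightarrow> incl_into_L1 \<xi> Z M (SigmaX M X) (mT T)
              \<and> (\<forall>f\<in>Z. S f = I_vm M (SigmaX M X) (mT T) f))"
proof -
  have X: "ideal_fs M X" using assms(1) by (rule qbfs_ideal)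
  interpret self: qbfs_extension M X T M X nX T
    by unfold_locales (use assms X in auto)
  have optimal: "incl_into_L1 \<xi> Z M (SigmaX M X) (mT T) \<and> (\<forall>f\<in>Z. S f = I_vm M (SigmaX M X) (mT T) f)"
    if "sets \<xi> = sets M" "qbfs \<xi> Z nZ" "sigma_order_cont \<xi> Z nZ" "X \<subseteq> Z" "cont_lin_op Z nZ S"
      "\<forall>f\<in>X. T f = S f"
    for \<xi> Z nZ and S :: "('a \<Rightarrow> real) \<Rightarrow> 'b"
  proof -
    interpret qbfs_extension M X T \<xi> Z nZ S by unfold_locales (use that assms X in auto)
    show ?thesis using incl_into_L1_Z I_vm_eq_S by simp
  qed
  show ?thesis
    using self.incl_into_L1_Z self.I_vm_eq_S self.I_vm_continuous optimal by (auto 0 3)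
qed

end
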